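(* Let $K$ be a field of characteristic different from $2$, let $K^{\mathrm{sep}}$ be a separable closure of $K$ with $G_K=\mathrm{Gal}(K^{\mathrm{sep}}/K)$, and let $E/K$ be an elliptic curve. The following statements are equivalent: (1) $E$ is a Legendre elliptic curve over $K$; (2) $E$ can be given (over $K$) by an equation $y^2=(x-a)(x-b)(x-c)$ with $a,b,c\in K$, in which at least one of $\pm(a-b),\pm(b-c),\pm(c-a)$ is a square in $K^*$; (3) all points of order $2$ on $E$ are $K$-rational, and there exists a point $P\in E(K^{\mathrm{sep}})[4]$ such that $-P$ is not in the $G_K$-orbit of $P$.
   Context: An elliptic curve $E/K$ (with $\mathrm{char}\,K\neq 2$) is called a Legendre elliptic curve over $K$ if there exists $\lambda\in K$, $\lambda\neq 0,1$, such that $E$ is isomorphic over $K$ to the curve $E_\lambda: y^2=x(x-1)(x-\lambda)$. *)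

theory Defs
  imports "HOL-Computational_Algebra.Polynomial"
begin

definition subfield :: "'a::field set \<Rightarrow> bool" where
  "subfield K \<longleftrightarrow> 0 \<in> K \<and> 1 \<in> K \<and>
     (\<forall>x\<in>K. \<forall>y\<in>K. x + y \<in> K \<and> x * y \<in> K) \<and>
     (\<forall>x\<in>K. - x \<in> K \<and> inverse x \<in> K)"

definition separable_over :: "'a::field set \<Rightarrow> 'a \<Rightarrow> bool" where
  "separable_over K x \<longleftrightarrow>
     (\<exists>p. p \<noteq> 0 \<and> (\<forall>i. coeff p i \<in> K) \<and> coprime p (pderiv p) \<and> poly p x = 0)"

definition separably_closed :: "'a::field set \<Rightarrow> bool" where
  "separably_closed L \<longleftrightarrow>
     (\<forall>p. (\<forall>i. coeff p i \<in> L) \<and> degree p \<ge> 1 \<and> coprime p (pderiv p)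
          \<longrightarrow> (\<exists>x\<in>L. poly p x = 0))"

definition separable_closure :: "'a::field set \<Rightarrow> 'a set \<Rightarrow> bool" where
  "separable_closure K L \<longleftrightarrow> subfield K \<and> subfield L \<and> K \<subseteq> L \<and>
     (\<forall>x\<in>L. separable_over K x) \<and> separably_closed L"

definition galois_group :: "'a::field set \<Rightarrow> 'a set \<Rightarrow> ('a \<Rightarrow> 'a) set" where
  "galois_group K L = {\<sigma>. bij_betw \<sigma> L L \<and>
     (\<forall>x\<in>L. \<forall>y\<in>L. \<sigma> (x + y) = \<sigma> x + \<sigma> y \<and> \<sigma> (x * y) = \<sigma> x * \<sigma> y) \<and>
     (\<forall>k\<in>K. \<sigma> k = k)}"

text \<open>(a1, a2, a3, a4, a6) for y^2 + a1 x y + a3 y = x^3 + a2 x^2 + a4 x + a6.\<close>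
type_synonym 'a weierstrass = "'a \<times> 'a \<times> 'a \<times> 'a \<times> 'a"

definition discriminant :: "'a::field weierstrass \<Rightarrow> 'a" where
  "discriminant E = (case E of (a1, a2, a3, a4, a6) \<Rightarrow>
     let b2 = a1^2 + 4*a2; b4 = 2*a4 + a1*a3; b6 = a3^2 + 4*a6;
         b8 = a1^2*a6 + 4*a2*a6 - a1*a3*a4 + a2*a3^2 - a4^2
     in - (b2^2*b8) - 8*b4^3 - 27*b6^2 + 9*b2*b4*b6)"

definition elliptic_curve :: "'a::field set \<Rightarrow> 'a weierstrass \<Rightarrow> bool" where
  "elliptic_curve K E \<longleftrightarrow> (case E of (a1, a2, a3, a4, a6) \<Rightarrow>
     a1 \<in> K \<and> a2 \<in> K \<and> a3 \<in> K \<and> a4 \<in> K \<and> a6 \<in> K) \<and> discriminant E \<noteq> 0"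

text \<open>Isomorphism over K (Silverman, Table 3.1): E' is obtained from E by the
  substitution x = u^2 x' + r, y = u^3 y' + s u^2 x' + t with u,r,s,t in K, u nonzero.\<close>
definition iso_over :: "'a::field set \<Rightarrow> 'a weierstrass \<Rightarrow> 'a weierstrass \<Rightarrow> bool" where
  "iso_over K E E' \<longleftrightarrow> (case E of (a1, a2, a3, a4, a6) \<Rightarrow> case E' of (a1', a2', a3', a4', a6') \<Rightarrow>
     (\<exists>u\<in>K. \<exists>r\<in>K. \<exists>s\<in>K. \<exists>t\<in>K. u \<noteq> 0 \<and>
        u * a1' = a1 + 2*s \<and>
        u^2 * a2' = a2 - s*a1 + 3*r - s^2 \<and>
        u^3 * a3' = a3 + r*a1 + 2*t \<and>
        u^4 * a4' = a4 - s*a3 + 2*r*a2 - (t + r*s)*a1 + 3*r^2 - 2*s*t \<and>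
        u^6 * a6' = a6 + r*a4 + r^2*a2 + r^3 - t*a3 - t^2 - r*t*a1))"

text \<open>Legendre curve y^2 = x(x-1)(x-lambda).\<close>
definition legendre_curve :: "'a::field \<Rightarrow> 'a weierstrass" where
  "legendre_curve l = (0, - (1 + l), 0, l, 0)"

definition is_legendre :: "'a::field set \<Rightarrow> 'a weierstrass \<Rightarrow> bool" where
  "is_legendre K E \<longleftrightarrow> (\<exists>l\<in>K. l \<noteq> 0 \<and> l \<noteq> 1 \<and> iso_over K E (legendre_curve l))"

text \<open>Curve y^2 = (x-a)(x-b)(x-c).\<close>
definition cubic_curve :: "'a::field \<Rightarrow> 'a \<Rightarrow> 'a \<Rightarrow> 'a weierstrass" where
  "cubic_curve a b c = (0, - (a + b + c), 0, a*b + b*c + c*a, - (a*b*c))"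

definition nonzero_square :: "'a::field set \<Rightarrow> 'a \<Rightarrow> bool" where
  "nonzero_square K z \<longleftrightarrow> (\<exists>t\<in>K. t \<noteq> 0 \<and> t^2 = z)"

datatype 'a point = Infinity | Affine 'a 'a

definition on_curve :: "'a::field weierstrass \<Rightarrow> 'a set \<Rightarrow> 'a point \<Rightarrow> bool" where
  "on_curve E S P \<longleftrightarrow> (case P of Infinity \<Rightarrow> True
     | Affine x y \<Rightarrow> x \<in> S \<and> y \<in> S \<and> (case E of (a1, a2, a3, a4, a6) \<Rightarrow>
          y^2 + a1*x*y + a3*y = x^3 + a2*x^2 + a4*x + a6))"

definition point_neg :: "'a::field weierstrass \<Rightarrow> 'a point \<Rightarrow> 'a point" where
  "point_neg E P = (case P of Infinity \<Rightarrow> Infinity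
     | Affine x y \<Rightarrow> (case E of (a1, a2, a3, a4, a6) \<Rightarrow> Affine x (- y - a1*x - a3)))"

text \<open>Doubling map [2] of the group law (Silverman III.2.3).\<close>
definition point_double :: "'a::field weierstrass \<Rightarrow> 'a point \<Rightarrow> 'a point" where
  "point_double E P = (case P of Infinity \<Rightarrow> Infinity
     | Affine x y \<Rightarrow> (case E of (a1, a2, a3, a4, a6) \<Rightarrow>
         if 2*y + a1*x + a3 = 0 then Infinity
         else let d = 2*y + a1*x + a3;
                  lam = (3*x^2 + 2*a2*x + a4 - a1*y) / d;
                  nu = (a4*x - x^3 + 2*a6 - a3*y) / d;
                  x3 = lam^2 + a1*lam - a2 - 2*x;
                  y3 = - (lam + a1)*x3 - nu - a3
              in Affine x3 y3))"

definition point_map :: "('a \<Rightarrow> 'a) \<Rightarrow> 'a point \<Rightarrow> 'a point" where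
  "point_map \<sigma> P = (case P of Infinity \<Rightarrow> Infinity | Affine x y \<Rightarrow> Affine (\<sigma> x) (\<sigma> y))"

end

theory Submission
  imports Defs
begin

text \<open>
  (1) and (2): the Legendre curve is y^2 = (x - 0)(x - 1)(x - lambda), and 1 - 0 is a square.
  Conversely, if a - b = t^2, the substitution x = t^2 x' + b, y = t^3 y' turns
  y^2 = (x - a)(x - b)(x - c) into Legendre form with lambda = (c - b)/(a - b).

  (2) implies (3): the points of order 2 are (a, 0), (b, 0), (c, 0). If a - b = t^2 and
  v^2 = (a - b)(a - c), then P = (a + v, v (v + a - b) / t) satisfies 2P = (a, 0), and
  t y = (x - a)(x - b) shows that every automorphism fixing x fixes y, so none maps P to
  -P = (x, -y).

  (3) implies (2): rational 2-torsion gives a model with a, b, c in K. A point P = (x, y) with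
  2P = (e, 0) satisfies (x - e)^2 = (e - e')(e - e''). If no difference of a, b, c is a
  square in K, then y lies outside M = K(x) while y^2 lies in M, so some automorphism of the
  separable closure over M maps y to -y and hence P to -P. It is obtained by extending
  y \<mapsto> -y from M(y) with Zorn's lemma, using that every ring between K and its separable
  closure is a field.
\<close>

section \<open>Subfields and polynomials over them\<close>

definition subring :: "'a::field set \<Rightarrow> bool" where
  "subring R \<longleftrightarrow> 0 \<in> R \<and> 1 \<in> R \<and> (\<forall>x\<in>R. \<forall>y\<in>R. x + y \<in> R \<and> x * y \<in> R) \<and> (\<forall>x\<in>R. - x \<in> R)"

lemma subring_0: "subring R \<Longrightarrow> 0 \<in> R"
  and subring_1: "subring R \<Longrightarrow> 1 \<in> R"
  and subring_add: "subring R \<Longrightarrow> x \<in> R \<Longrightarrow> y \<in> R \<Longrightarrow> x + y \<in> R"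
  and subring_mult: "subring R \<Longrightarrow> x \<in> R \<Longrightarrow> y \<in> R \<Longrightarrow> x * y \<in> R"
  and subring_uminus: "subring R \<Longrightarrow> x \<in> R \<Longrightarrow> - x \<in> R"
  by (auto simp: subring_def)

lemma subring_diff: "subring R \<Longrightarrow> x \<in> R \<Longrightarrow> y \<in> R \<Longrightarrow> x - y \<in> R"
  using subring_add[of R x "- y"] subring_uminus[of R y] by simp

lemma subfield_imp_subring: "subfield K \<Longrightarrow> subring K"
  by (auto simp: subfield_def subring_def)

lemma subfield_inverse: "subfield K \<Longrightarrow> x \<in> K \<Longrightarrow> inverse x \<in> K"
  by (auto simp: subfield_def)

lemma subfield_divide: "subfield K \<Longrightarrow> x \<in> K \<Longrightarrow> y \<in> K \<Longrightarrow> x / y \<in> K"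
  using subring_mult[OF subfield_imp_subring, of K x "inverse y"] subfield_inverse[of K y]
  by (simp add: divide_inverse)

lemma subfield_power: "subfield K \<Longrightarrow> x \<in> K \<Longrightarrow> x ^ n \<in> K"
  by (induction n) (auto intro: subring_mult subring_1 subfield_imp_subring)

lemma subfield_numeral: "subfield K \<Longrightarrow> numeral n \<in> K"
proof -
  assume K: "subfield K"
  have "of_nat m \<in> K" for m
    by (induction m) (auto intro: subring_add subring_0 subring_1 subfield_imp_subring[OF K])
  from this[of "numeral n"] show ?thesis by simp
qed

lemmas subfield_closed = subfield_imp_subring[THEN subring_0] subfield_imp_subring[THEN subring_1]
  subfield_imp_subring[THEN subring_add] subfield_imp_subring[THEN subring_mult]
  subfield_imp_subring[THEN subring_uminus] subfield_imp_subring[THEN subring_diff]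
  subfield_inverse subfield_divide subfield_power subfield_numeral

definition poly_over :: "'a::field set \<Rightarrow> 'a poly \<Rightarrow> bool" where
  "poly_over R p \<longleftrightarrow> (\<forall>i. coeff p i \<in> R)"

lemma poly_over_pCons [simp]: "poly_over R (pCons a p) \<longleftrightarrow> a \<in> R \<and> poly_over R p"
  unfolding poly_over_def by (metis coeff_pCons_0 coeff_pCons_Suc not0_implies_Suc)

lemma poly_over_0: "subring R \<Longrightarrow> poly_over R 0"
  and poly_over_1: "subring R \<Longrightarrow> poly_over R 1"
  by (simp_all add: poly_over_def subring_0 subring_1)

lemma poly_over_add: "subring R \<Longrightarrow> poly_over R p \<Longrightarrow> poly_over R q \<Longrightarrow> poly_over R (p + q)"
  and poly_over_uminus: "subring R \<Longrightarrow> poly_over R p \<Longrightarrow> poly_over R (- p)"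
  and poly_over_diff: "subring R \<Longrightarrow> poly_over R p \<Longrightarrow> poly_over R q \<Longrightarrow> poly_over R (p - q)"
  and poly_over_smult: "subring R \<Longrightarrow> a \<in> R \<Longrightarrow> poly_over R p \<Longrightarrow> poly_over R (smult a p)"
  and poly_over_monom: "subring R \<Longrightarrow> a \<in> R \<Longrightarrow> poly_over R (monom a n)"
  by (simp_all add: poly_over_def coeff_monom subring_add subring_uminus subring_diff subring_mult subring_0)

lemma poly_over_mult: "subring R \<Longrightarrow> poly_over R p \<Longrightarrow> poly_over R q \<Longrightarrow> poly_over R (p * q)"
  by (induction p) (simp_all add: poly_over_0 poly_over_add poly_over_smult subring_0)

lemma poly_over_mono: "poly_over R p \<Longrightarrow> R \<subseteq> S \<Longrightarrow> poly_over S p"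
  by (auto simp: poly_over_def)

lemma poly_in_subring: "subring R \<Longrightarrow> poly_over R p \<Longrightarrow> x \<in> R \<Longrightarrow> poly p x \<in> R"
  by (induction p) (auto intro: subring_add subring_mult subring_0)

definition ring_hom_on :: "'a::field set \<Rightarrow> ('a \<Rightarrow> 'a) \<Rightarrow> bool" where
  "ring_hom_on R f \<longleftrightarrow> (\<forall>x\<in>R. \<forall>y\<in>R. f (x + y) = f x + f y \<and> f (x * y) = f x * f y)"

lemma ring_hom_on_add: "ring_hom_on R f \<Longrightarrow> x \<in> R \<Longrightarrow> y \<in> R \<Longrightarrow> f (x + y) = f x + f y"
  and ring_hom_on_mult: "ring_hom_on R f \<Longrightarrow> x \<in> R \<Longrightarrow> y \<in> R \<Longrightarrow> f (x * y) = f x * f y"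
  by (auto simp: ring_hom_on_def)

lemma ring_hom_on_0: "ring_hom_on R f \<Longrightarrow> subring R \<Longrightarrow> f 0 = 0"
  using ring_hom_on_add[of R f 0 0] subring_0[of R] by (metis add_0 add_cancel_right_right)

lemma ring_hom_on_uminus: "ring_hom_on R f \<Longrightarrow> subring R \<Longrightarrow> x \<in> R \<Longrightarrow> f (- x) = - f x"
  using ring_hom_on_add[of R f x "- x"] ring_hom_on_0[of R f] subring_uminus[of R x]
  by (simp add: eq_neg_iff_add_eq_0 add.commute)

lemma ring_hom_on_diff: "ring_hom_on R f \<Longrightarrow> subring R \<Longrightarrow> x \<in> R \<Longrightarrow> y \<in> R \<Longrightarrow> f (x - y) = f x - f y"
  using ring_hom_on_add[of R f x "- y"] ring_hom_on_uminus[of R f y] subring_uminus[of R y] by simp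

lemma ring_hom_on_nonzero:
  assumes "subfield F" "ring_hom_on F f" "f 1 = 1" "x \<in> F" "x \<noteq> 0"
  shows "f x \<noteq> 0"
proof
  assume "f x = 0"
  have "f (x * inverse x) = f x * f (inverse x)"
    using assms ring_hom_on_mult subfield_inverse by blast
  with \<open>f x = 0\<close> assms show False by simp
qed

lemma ring_hom_on_inj:
  assumes F: "subfield F" and f: "ring_hom_on F f" "f 1 = 1"
  shows "inj_on f F"
proof (rule inj_onI)
  fix x y assume xy: "x \<in> F" "y \<in> F" "f x = f y"
  then have "f (x - y) = 0" using ring_hom_on_diff[OF f(1) subfield_imp_subring[OF F]] by simp
  then show "x = y" using ring_hom_on_nonzero[OF F f] xy F by (meson eq_iff_diff_eq_0 subfield_closed(6))
qed

lemma map_poly_add_on: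
  "ring_hom_on R f \<Longrightarrow> subring R \<Longrightarrow> poly_over R p \<Longrightarrow> poly_over R q \<Longrightarrow>
    map_poly f (p + q) = map_poly f p + map_poly f q"
  and map_poly_diff_on:
  "ring_hom_on R f \<Longrightarrow> subring R \<Longrightarrow> poly_over R p \<Longrightarrow> poly_over R q \<Longrightarrow>
    map_poly f (p - q) = map_poly f p - map_poly f q"
  and map_poly_smult_on:
  "ring_hom_on R f \<Longrightarrow> subring R \<Longrightarrow> a \<in> R \<Longrightarrow> poly_over R q \<Longrightarrow>
    map_poly f (smult a q) = smult (f a) (map_poly f q)"
  by (intro poly_eqI;
      simp add: coeff_map_poly ring_hom_on_0 ring_hom_on_add ring_hom_on_diff ring_hom_on_mult poly_over_def)+

lemma map_poly_mult_on:
  assumes f: "ring_hom_on R f" "subring R" and q: "poly_over R q"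
  shows "poly_over R p \<Longrightarrow> map_poly f (p * q) = map_poly f p * map_poly f q"
proof (induction p)
  case (pCons a p)
  have f0: "f 0 = 0" using ring_hom_on_0[OF f] .
  have "map_poly f (pCons a p * q) = map_poly f (smult a q) + map_poly f (pCons 0 (p * q))"
    using pCons f q by (simp add: map_poly_add_on poly_over_smult poly_over_mult subring_0)
  also have "\<dots> = map_poly f (pCons a p) * map_poly f q"
    using pCons f q by (simp add: map_poly_smult_on map_poly_pCons f0)
  finally show ?case .
qed simp

lemma poly_map_poly_on:
  "ring_hom_on R f \<Longrightarrow> subring R \<Longrightarrow> poly_over R p \<Longrightarrow> x \<in> R \<Longrightarrow>
    poly (map_poly f p) (f x) = f (poly p x)"
  by (induction p)
     (simp_all add: map_poly_pCons ring_hom_on_0 ring_hom_on_add ring_hom_on_mult poly_in_subring subring_mult)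

lemma poly_over_map_poly:
  "ring_hom_on R f \<Longrightarrow> subring R \<Longrightarrow> f ` R \<subseteq> L \<Longrightarrow> poly_over R p \<Longrightarrow> poly_over L (map_poly f p)"
  by (auto simp: poly_over_def coeff_map_poly ring_hom_on_0)

lemma map_poly_fixed:
  "poly_over K p \<Longrightarrow> \<forall>a\<in>K. f a = a \<Longrightarrow> 0 \<in> K \<Longrightarrow> map_poly f p = p"
  by (intro poly_eqI) (auto simp: poly_over_def coeff_map_poly)

lemma poly_over_div_mod:
  assumes F: "subfield F" and p: "poly_over F p" "p \<noteq> 0"
  shows "poly_over F g \<Longrightarrow>
    \<exists>q r. poly_over F q \<and> poly_over F r \<and> g = q * p + r \<and> (r = 0 \<or> degree r < degree p)"
proof (induction "degree g" arbitrary: g rule: less_induct)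
  case less
  have R: "subring F" using F by (rule subfield_imp_subring)
  show ?case
  proof (cases "g = 0 \<or> degree g < degree p")
    case True
    then show ?thesis using less.prems R by (intro exI[of _ 0] exI[of _ g]) (auto simp: poly_over_0)
  next
    case False
    then have g0: "g \<noteq> 0" and dg: "degree p \<le> degree g" by auto
    define c where "c = lead_coeff g / lead_coeff p"
    define m where "m = monom c (degree g - degree p)"
    have cF: "c \<in> F" unfolding c_def using less.prems p F by (simp add: poly_over_def subfield_divide)
    have "degree (m * p) = degree g" "coeff (m * p) (degree g) = lead_coeff g"
      using g0 p dg by (simp_all add: m_def c_def degree_mult_eq degree_monom_eq coeff_monom_mult)
    then have "degree (g - m * p) < degree g \<or> g - m * p = 0"
      by (metis degree_diff_le le_antisym le_refl linorder_not_le coeff_diff diff_self leading_coeff_0_iff)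
    moreover have og1: "poly_over F (g - m * p)" unfolding m_def using less.prems cF p R
      by (intro poly_over_diff poly_over_mult poly_over_monom) auto
    ultimately obtain q r where qr: "poly_over F q" "poly_over F r" "g - m * p = q * p + r"
      "r = 0 \<or> degree r < degree p"
      using less.hyps R p(2) by (metis add_0 mult_zero_left poly_over_0)
    have "g = (q + m) * p + r" using qr(3) by (simp add: algebra_simps)
    moreover have "poly_over F (q + m)" using qr cF R by (simp add: m_def poly_over_add poly_over_monom)
    ultimately show ?thesis using qr by blast
  qed
qed

definition is_minpoly :: "'a::field set \<Rightarrow> 'a \<Rightarrow> 'a poly \<Rightarrow> bool" where
  "is_minpoly F z p \<longleftrightarrow> p \<noteq> 0 \<and> poly_over F p \<and> poly p z = 0 \<and>
     (\<forall>q. q \<noteq> 0 \<and> poly_over F q \<and> poly q z = 0 \<longrightarrow> degree p \<le> degree q)"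

lemma is_minpoly_exists:
  assumes "q \<noteq> 0" "poly_over F q" "poly q z = 0"
  obtains p where "is_minpoly F z p"
  using ex_has_least_nat[of "\<lambda>q. q \<noteq> 0 \<and> poly_over F q \<and> poly q z = 0" q degree] assms
  unfolding is_minpoly_def by blast

lemma is_minpoly_dvd:
  assumes F: "subfield F" and m: "is_minpoly F z p" and g: "poly_over F g" "poly g z = 0"
  obtains q where "poly_over F q" "g = q * p"
proof -
  from m have p: "poly_over F p" "p \<noteq> 0" "poly p z = 0" by (auto simp: is_minpoly_def)
  obtain q r where qr: "poly_over F q" "poly_over F r" "g = q * p + r" "r = 0 \<or> degree r < degree p"
    using poly_over_div_mod[OF F p(1,2) g(1)] by blast
  have "poly r z = 0" using qr(3) g(2) p(3) by simp
  then have "r = 0" using m qr(2,4) unfolding is_minpoly_def by (metis not_le)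
  then show ?thesis using qr that by auto
qed

lemma is_minpoly_degree: "is_minpoly F z p \<Longrightarrow> degree p \<ge> 1"
  unfolding is_minpoly_def
  by (metis One_nat_def degree_0_id less_one not_less poly_pCons poly_0 mult_zero_right add_0_right
      pCons_eq_0_iff)

lemma coprime_pderiv_dvd:
  fixes d p :: "'a::field poly"
  assumes "d dvd p" "coprime p (pderiv p)"
  shows "coprime d (pderiv d)"
proof (rule coprimeI)
  fix c assume c: "c dvd d" "c dvd pderiv d"
  from assms(1) obtain e where p: "p = d * e" by (auto elim: dvdE)
  have "c dvd pderiv p" using c by (simp add: p pderiv_mult)
  moreover have "c dvd p" using c p by simp
  ultimately show "is_unit c" using assms(2) coprime_common_divisor by blast
qed

lemma is_unit_combination_imp_coprime:
  fixes p q :: "'a::field poly"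
  assumes "is_unit (a * p + b * q)"
  shows "coprime p q"
proof (rule coprimeI)
  fix c assume "c dvd p" "c dvd q"
  then have "c dvd a * p + b * q" by simp
  then show "is_unit c" using assms by (rule dvd_unit_imp_unit)
qed

definition algebraic_over :: "'a::field set \<Rightarrow> 'a \<Rightarrow> bool" where
  "algebraic_over K x \<longleftrightarrow> (\<exists>q. q \<noteq> 0 \<and> poly_over K q \<and> poly q x = 0)"

lemma separable_over_imp_algebraic_over: "separable_over K x \<Longrightarrow> algebraic_over K x"
  by (auto simp: separable_over_def algebraic_over_def poly_over_def)

lemma root_poly_with_nonzero_constant:
  fixes q :: "'a::field poly"
  shows "q \<noteq> 0 \<Longrightarrow> poly_over K q \<Longrightarrow> poly q x = 0 \<Longrightarrow> x \<noteq> 0 \<Longrightarrow>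
    \<exists>q'. poly_over K q' \<and> poly q' x = 0 \<and> coeff q' 0 \<noteq> 0"
proof (induction q)
  case (pCons c p)
  then show ?case by (cases "c = 0") (auto intro!: exI[of _ "pCons c p"])
qed simp

lemma algebraic_inverse_poly:
  assumes K: "subfield K" and x: "algebraic_over K x" "x \<noteq> 0"
  obtains g where "poly_over K g" "inverse x = poly g x"
proof -
  obtain q where "poly_over K q" "poly q x = 0" "coeff q 0 \<noteq> 0"
    using root_poly_with_nonzero_constant x unfolding algebraic_over_def by blast
  moreover obtain c g where "q = pCons c g" by (cases q)
  ultimately have g: "poly_over K g" "c + x * poly g x = 0" "c \<in> K" "c \<noteq> 0" by auto
  then have "inverse x = poly (smult (- inverse c) g) x"
    using x(2) by (simp add: field_simps add_eq_0_iff)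
  moreover have "poly_over K (smult (- inverse c) g)"
    using g K by (simp add: poly_over_smult poly_over_uminus subfield_imp_subring subfield_closed)
  ultimately show ?thesis using that by blast
qed

lemma subring_algebraic_imp_subfield:
  assumes K: "subfield K" and R: "subring R" "K \<subseteq> R" and alg: "\<forall>x\<in>R. algebraic_over K x"
  shows "subfield R"
proof -
  have "inverse x \<in> R" if x: "x \<in> R" for x
  proof (cases "x = 0")
    case False
    then obtain g where "poly_over K g" "inverse x = poly g x"
      using algebraic_inverse_poly[OF K] alg x by blast
    then show ?thesis using poly_in_subring[OF R(1)] poly_over_mono R(2) x by metis
  qed (simp add: subring_0[OF R(1)])
  then show ?thesis using R(1) by (simp add: subfield_def subring_def)
qed

definition adjoin :: "'a::field set \<Rightarrow> 'a \<Rightarrow> 'a set" where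
  "adjoin F z = {poly g z | g. poly_over F g}"

lemma subring_adjoin:
  assumes F: "subring F"
  shows "subring (adjoin F z)"
proof -
  have mem: "poly g z \<in> adjoin F z" if "poly_over F g" for g
    using that by (auto simp: adjoin_def)
  have "0 \<in> adjoin F z" "1 \<in> adjoin F z"
    using mem[of 0] mem[of 1] F by (simp_all add: poly_over_0 poly_over_1)
  moreover have "x + y \<in> adjoin F z \<and> x * y \<in> adjoin F z \<and> - x \<in> adjoin F z"
    if xy: "x \<in> adjoin F z" "y \<in> adjoin F z" for x y
  proof -
    obtain g h where "x = poly g z" "poly_over F g" "y = poly h z" "poly_over F h"
      using xy by (auto simp: adjoin_def)
    then show ?thesis
      using mem[of "g + h"] mem[of "g * h"] mem[of "- g"] F
      by (simp add: poly_over_add poly_over_mult poly_over_uminus)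
  qed
  ultimately show ?thesis by (simp add: subring_def)
qed

lemma adjoin_base: "subring F \<Longrightarrow> F \<subseteq> adjoin F z"
  unfolding adjoin_def by (force intro: exI[of _ "[:_:]"] simp: poly_over_0)

lemma adjoin_gen: "subring F \<Longrightarrow> z \<in> adjoin F z"
  unfolding adjoin_def by (intro CollectI exI[of _ "[:0, 1:]"]) (simp add: poly_over_0 subring_0 subring_1)

lemma adjoin_subset: "subring L \<Longrightarrow> F \<subseteq> L \<Longrightarrow> z \<in> L \<Longrightarrow> adjoin F z \<subseteq> L"
  unfolding adjoin_def using poly_in_subring poly_over_mono by blast

section \<open>Extending embeddings into the separable closure\<close>

lemma poly_map_poly_minpoly_root_eq:
  assumes F: "subfield F" and f: "ring_hom_on F f"
    and m: "is_minpoly F z p" and z': "poly (map_poly f p) z' = 0"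
    and gh: "poly_over F g" "poly_over F h" "poly g z = poly h z"
  shows "poly (map_poly f g) z' = poly (map_poly f h) z'"
proof -
  have R: "subring F" using F by (rule subfield_imp_subring)
  have p: "poly_over F p" using m by (simp add: is_minpoly_def)
  have "poly_over F (g - h)" "poly (g - h) z = 0" using gh R by (auto simp: poly_over_diff)
  then obtain q where q: "poly_over F q" "g - h = q * p" using is_minpoly_dvd[OF F m] by blast
  have "map_poly f g - map_poly f h = map_poly f q * map_poly f p"
    using map_poly_diff_on[OF f R gh(1,2)] map_poly_mult_on[OF f R p q(1)] q(2) by simp
  then have "poly (map_poly f g) z' - poly (map_poly f h) z' = 0"
    using z' by (metis poly_diff poly_mult mult_zero_right)
  then show ?thesis by simp
qed

lemma extend_hom_adjoin:
  assumes F: "subfield F" and L: "subfield L"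
    and f: "ring_hom_on F f" "f ` F \<subseteq> L" "f 1 = 1"
    and m: "is_minpoly F z p" and z': "z' \<in> L" "poly (map_poly f p) z' = 0"
  obtains f' where "ring_hom_on (adjoin F z) f'" "\<forall>a\<in>F. f' a = f a" "f' z = z'"
    "f' ` adjoin F z \<subseteq> L"
proof -
  have R: "subring F" "subring L" using F L by (simp_all add: subfield_imp_subring)
  note well_defined = poly_map_poly_minpoly_root_eq[OF F f(1) m z'(2)]
  define f' where "f' w = poly (map_poly f (SOME g. poly_over F g \<and> poly g z = w)) z'" for w
  have f'_poly: "f' (poly g z) = poly (map_poly f g) z'" if g: "poly_over F g" for g
  proof -
    have "\<exists>h. poly_over F h \<and> poly h z = poly g z" using g by blast
    then have "poly_over F (SOME h. poly_over F h \<and> poly h z = poly g z) \<and>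
               poly (SOME h. poly_over F h \<and> poly h z = poly g z) z = poly g z"
      by (rule someI_ex)
    then show ?thesis unfolding f'_def using well_defined g by blast
  qed
  have "ring_hom_on (adjoin F z) f'"
    unfolding ring_hom_on_def
  proof (intro ballI conjI)
    fix x y assume "x \<in> adjoin F z" "y \<in> adjoin F z"
    then obtain g h where g: "poly_over F g" "x = poly g z" "poly_over F h" "y = poly h z"
      by (auto simp: adjoin_def)
    show "f' (x + y) = f' x + f' y"
      using f'_poly[of "g + h"] g R by (simp add: poly_over_add map_poly_add_on[OF f(1)] f'_poly)
    show "f' (x * y) = f' x * f' y"
      using f'_poly[of "g * h"] g R by (simp add: poly_over_mult map_poly_mult_on[OF f(1)] f'_poly)
  qed
  moreover have "f' a = f a" if "a \<in> F" for a
    using f'_poly[of "[:a:]"] that R ring_hom_on_0[OF f(1)] by (simp add: poly_over_0 map_poly_pCons)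
  moreover have "f' z = z'"
    using f'_poly[of "[:0, 1:]"] R f(3) ring_hom_on_0[OF f(1)]
    by (simp add: poly_over_0 subring_0 subring_1 map_poly_pCons)
  moreover have "f' ` adjoin F z \<subseteq> L"
    using f'_poly poly_in_subring[OF R(2) poly_over_map_poly[OF f(1) R(1) f(2)] z'(1)]
    by (auto simp: adjoin_def)
  ultimately show ?thesis using that by blast
qed

definition embedding_over :: "'a::field set \<Rightarrow> 'a set \<Rightarrow> 'a set \<Rightarrow> ('a \<Rightarrow> 'a) \<Rightarrow> bool" where
  "embedding_over K L F f \<longleftrightarrow> subfield F \<and> K \<subseteq> F \<and> F \<subseteq> L \<and> ring_hom_on F f \<and> f ` F \<subseteq> L \<and>
     (\<forall>k\<in>K. f k = k)"

lemma subfield_adjoin: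
  assumes sc: "separable_closure K L" and F: "subfield F" "K \<subseteq> F" "F \<subseteq> L" and z: "z \<in> L"
  shows "subfield (adjoin F z)"
proof (rule subring_algebraic_imp_subfield)
  have L: "subring L" using sc by (simp add: separable_closure_def subfield_imp_subring)
  show "subring (adjoin F z)" "K \<subseteq> adjoin F z"
    using F subring_adjoin adjoin_base subfield_imp_subring by blast+
  show "\<forall>x\<in>adjoin F z. algebraic_over K x"
  proof
    fix x assume "x \<in> adjoin F z"
    then have "x \<in> L" using adjoin_subset[OF L F(3) z] by blast
    then show "algebraic_over K x"
      using sc separable_over_imp_algebraic_over unfolding separable_closure_def by blast
  qed
qed (use sc in \<open>simp add: separable_closure_def\<close>)

text \<open>The image of the minimal polynomial divides the separable polynomial of z over K,
  so it is separable and has a root in the separably closed L.\<close>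
lemma embedding_over_minpoly_root:
  assumes sc: "separable_closure K L" and e: "embedding_over K L F f" and z: "z \<in> L"
    and m: "is_minpoly F z p"
  obtains z' where "z' \<in> L" "poly (map_poly f p) z' = 0"
proof -
  have K: "subfield K" using sc by (simp add: separable_closure_def)
  have F: "subfield F" "K \<subseteq> F" and f: "ring_hom_on F f" "f ` F \<subseteq> L" and fK: "\<forall>k\<in>K. f k = k"
    using e by (auto simp: embedding_over_def)
  have RF: "subring F" using F(1) by (rule subfield_imp_subring)
  have p: "p \<noteq> 0" "poly_over F p" using m by (auto simp: is_minpoly_def)
  obtain q where q: "poly_over K q" "coprime q (pderiv q)" "poly q z = 0"
    using sc z by (auto simp: separable_closure_def separable_over_def poly_over_def)
  obtain g where g: "poly_over F g" "q = g * p"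
    using is_minpoly_dvd[OF F(1) m poly_over_mono[OF q(1) F(2)] q(3)] .
  have "q = map_poly f q" using map_poly_fixed[OF q(1) fK subfield_closed(1)[OF K]] by simp
  also have "\<dots> = map_poly f g * map_poly f p" using map_poly_mult_on[OF f(1) RF p(2) g(1)] g(2) by simp
  finally have "coprime (map_poly f p) (pderiv (map_poly f p))"
    using coprime_pderiv_dvd q(2) by (metis dvd_triv_right)
  moreover have "degree (map_poly f p) \<ge> 1"
  proof -
    have "coeff (map_poly f p) (degree p) = f (lead_coeff p)"
      by (simp add: coeff_map_poly ring_hom_on_0[OF f(1) RF])
    moreover have "lead_coeff p \<in> F" "lead_coeff p \<noteq> 0" using p by (auto simp: poly_over_def)
    moreover have "f 1 = 1" using fK subfield_closed(2)[OF K] by blast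
    ultimately have "coeff (map_poly f p) (degree p) \<noteq> 0" using ring_hom_on_nonzero[OF F(1) f(1)] by simp
    then show ?thesis using le_degree is_minpoly_degree[OF m] by fastforce
  qed
  moreover have "\<forall>i. coeff (map_poly f p) i \<in> L"
    using poly_over_map_poly[OF f(1) RF f(2) p(2)] by (simp add: poly_over_def)
  ultimately show ?thesis
    using sc that unfolding separable_closure_def separably_closed_def by blast
qed

lemma embedding_over_extend_adjoin:
  assumes sc: "separable_closure K L" and e: "embedding_over K L F f" and z: "z \<in> L"
  obtains f' where "embedding_over K L (adjoin F z) f'" "\<forall>a\<in>F. f' a = f a"
proof -
  have L: "subfield L" and K: "subfield K" using sc by (auto simp: separable_closure_def)
  have F: "subfield F" "K \<subseteq> F" "F \<subseteq> L" and f: "ring_hom_on F f" "f ` F \<subseteq> L"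
    and fK: "\<forall>k\<in>K. f k = k"
    using e by (auto simp: embedding_over_def)
  have RF: "subring F" using F(1) by (rule subfield_imp_subring)
  have f1: "f 1 = 1" using fK subfield_closed(2)[OF K] by blast
  obtain q where q: "q \<noteq> 0" "poly_over K q" "poly q z = 0"
    using sc z by (auto simp: separable_closure_def separable_over_def poly_over_def)
  obtain p where m: "is_minpoly F z p"
    using is_minpoly_exists[OF q(1) poly_over_mono[OF q(2) F(2)] q(3)] .
  obtain z' where z': "z' \<in> L" "poly (map_poly f p) z' = 0"
    using embedding_over_minpoly_root[OF sc e z m] .
  obtain f' where f': "ring_hom_on (adjoin F z) f'" "\<forall>a\<in>F. f' a = f a" "f' ` adjoin F z \<subseteq> L"
    using extend_hom_adjoin[OF F(1) L f f1 m z'] by blast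
  have "K \<subseteq> adjoin F z" using F(2) adjoin_base[OF RF] by blast
  then have "embedding_over K L (adjoin F z) f'"
    unfolding embedding_over_def
    using f' fK F(2) subfield_adjoin[OF sc F z] adjoin_subset[OF subfield_imp_subring[OF L] F(3) z]
    by auto
  then show ?thesis using f'(2) that by blast
qed

definition graph_on :: "'a set \<Rightarrow> ('a \<Rightarrow> 'b) \<Rightarrow> ('a \<times> 'b) set" where
  "graph_on R f = (\<lambda>a. (a, f a)) ` R"

lemma graph_on_subset_iff: "graph_on R f \<subseteq> graph_on R' f' \<longleftrightarrow> R \<subseteq> R' \<and> (\<forall>a\<in>R. f' a = f a)"
  unfolding graph_on_def by auto

lemma fst_graph_on: "fst ` graph_on R f = R"
  by (simp add: graph_on_def image_image)

lemma union_chain_of_graphs: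
  assumes C: "C \<in> chains {graph_on R f | R f. P R f}"
  obtains R f where "\<Union>C = graph_on R f"
    and "\<forall>x\<in>R. \<forall>y\<in>R. \<exists>R' f'. graph_on R' f' \<in> C \<and> P R' f' \<and> x \<in> R' \<and> y \<in> R'"
proof -
  have mem: "\<exists>R f. X = graph_on R f \<and> P R f" if "X \<in> C" for X
    using C that by (auto simp: chains_def)
  have comparable: "X \<subseteq> Y \<or> Y \<subseteq> X" if "X \<in> C" "Y \<in> C" for X Y
    using C that by (auto simp: chains_def chain_subset_def)
  have single_valued: "b = b'" if ab: "(a, b) \<in> \<Union>C" "(a, b') \<in> \<Union>C" for a b b'
  proof -
    obtain X Y where "X \<in> C" "Y \<in> C" "(a, b) \<in> X" "(a, b') \<in> Y" using ab by blast
    then obtain R f where "(a, b) \<in> graph_on R f" "(a, b') \<in> graph_on R f"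
      using comparable mem by blast
    then show ?thesis by (auto simp: graph_on_def)
  qed
  define f where "f a = (SOME b. (a, b) \<in> \<Union>C)" for a
  have f: "f a = b" if "(a, b) \<in> \<Union>C" for a b
    using someI[of "\<lambda>b. (a, b) \<in> \<Union>C", OF that] single_valued that by (simp add: f_def)
  have union: "\<Union>C = graph_on (fst ` \<Union>C) f"
  proof
    show "\<Union>C \<subseteq> graph_on (fst ` \<Union>C) f"
    proof
      fix p assume p: "p \<in> \<Union>C"
      then have "p = (\<lambda>a. (a, f a)) (fst p)" using f[of "fst p" "snd p"] by simp
      then show "p \<in> graph_on (fst ` \<Union>C) f" unfolding graph_on_def using p by blast
    qed
    show "graph_on (fst ` \<Union>C) f \<subseteq> \<Union>C"
    proof
      fix p assume "p \<in> graph_on (fst ` \<Union>C) f"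
      then obtain q where "q \<in> \<Union>C" "p = (fst q, f (fst q))" by (auto simp: graph_on_def)
      then show "p \<in> \<Union>C" using f[of "fst q" "snd q"] by simp
    qed
  qed
  have directed: "\<exists>R' f'. graph_on R' f' \<in> C \<and> P R' f' \<and> x \<in> R' \<and> y \<in> R'"
    if xy: "x \<in> fst ` \<Union>C" "y \<in> fst ` \<Union>C" for x y
  proof -
    obtain X Y where XY: "X \<in> C" "Y \<in> C" "x \<in> fst ` X" "y \<in> fst ` Y" using xy by blast
    then obtain Z where "Z \<in> C" "x \<in> fst ` Z" "y \<in> fst ` Z" using comparable[OF XY(1,2)] by blast
    moreover obtain R f where "Z = graph_on R f" "P R f" using mem \<open>Z \<in> C\<close> by blast
    ultimately show ?thesis by (auto simp: fst_graph_on)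
  qed
  show ?thesis by (rule that[OF union]) (simp add: directed)
qed

text \<open>Extensions of f to intermediate fields, represented by their graphs so that Zorn's lemma
  for set inclusion applies.\<close>
definition extensions :: "'a::field set \<Rightarrow> 'a set \<Rightarrow> 'a set \<Rightarrow> ('a \<Rightarrow> 'a) \<Rightarrow> ('a \<times> 'a) set set" where
  "extensions K L F f = {graph_on R g | R g. embedding_over K L R g \<and> F \<subseteq> R \<and> (\<forall>a\<in>F. g a = f a)}"

lemma embedding_over_directed_union:
  assumes R0: "embedding_over K L R0 g0" "R0 \<subseteq> R" "\<forall>a\<in>R0. g a = g0 a"
    and directed: "\<And>x y. x \<in> R \<Longrightarrow> y \<in> R \<Longrightarrow> \<exists>R' g'. embedding_over K L R' g' \<and>
      x \<in> R' \<and> y \<in> R' \<and> R' \<subseteq> R \<and> (\<forall>a\<in>R'. g a = g' a)"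
  shows "embedding_over K L R g"
proof -
  have "subfield R"
    unfolding subfield_def
  proof (intro conjI ballI)
    show "0 \<in> R" "1 \<in> R" using R0 subfield_closed(1,2) by (auto simp: embedding_over_def)
  next
    fix x y assume "x \<in> R" "y \<in> R"
    then obtain R' g' where "embedding_over K L R' g'" "x \<in> R'" "y \<in> R'" "R' \<subseteq> R"
      using directed by blast
    then have "x + y \<in> R'" "x * y \<in> R'" "- x \<in> R'" "inverse x \<in> R'"
      using subfield_closed(3,4,5,7) by (auto simp: embedding_over_def)
    then show "x + y \<in> R" "x * y \<in> R" "- x \<in> R" "inverse x \<in> R"
      using \<open>R' \<subseteq> R\<close> by auto
  qed
  moreover have "x \<in> L \<and> g x \<in> L" if x: "x \<in> R" for x
  proof -
    obtain R' g' where "embedding_over K L R' g'" "x \<in> R'" "\<forall>a\<in>R'. g a = g' a"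
      using directed[OF x x] by blast
    then show ?thesis by (auto simp: embedding_over_def)
  qed
  moreover have "ring_hom_on R g"
    unfolding ring_hom_on_def
  proof (intro ballI conjI)
    fix x y assume "x \<in> R" "y \<in> R"
    then obtain R' g' where R': "embedding_over K L R' g'" "x \<in> R'" "y \<in> R'" "\<forall>a\<in>R'. g a = g' a"
      using directed by blast
    then have "x + y \<in> R'" "x * y \<in> R'" using subfield_closed(3,4) by (auto simp: embedding_over_def)
    then show "g (x + y) = g x + g y" "g (x * y) = g x * g y"
      using R' ring_hom_on_add ring_hom_on_mult by (auto simp: embedding_over_def)
  qed
  moreover have "K \<subseteq> R" "\<forall>k\<in>K. g k = k" using R0 by (auto simp: embedding_over_def)
  ultimately show ?thesis by (auto simp: embedding_over_def)
qed

lemma union_chain_extensions: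
  assumes C: "C \<in> chains (extensions K L F f)" "C \<noteq> {}"
  shows "\<Union>C \<in> extensions K L F f"
proof -
  obtain R g where union: "\<Union>C = graph_on R g"
    and directed: "\<forall>x\<in>R. \<forall>y\<in>R. \<exists>R' g'. graph_on R' g' \<in> C \<and>
      (embedding_over K L R' g' \<and> F \<subseteq> R' \<and> (\<forall>a\<in>F. g' a = f a)) \<and> x \<in> R' \<and> y \<in> R'"
    by (rule union_chain_of_graphs[OF C(1)[unfolded extensions_def]])
  have below: "R' \<subseteq> R \<and> (\<forall>a\<in>R'. g a = g' a)" if "graph_on R' g' \<in> C" for R' g'
  proof -
    have "graph_on R' g' \<subseteq> graph_on R g" using that union by blast
    then show ?thesis by (simp add: graph_on_subset_iff)
  qed
  obtain R0 g0 where R0: "graph_on R0 g0 \<in> C" "embedding_over K L R0 g0" "F \<subseteq> R0"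
    "\<forall>a\<in>F. g0 a = f a"
  proof -
    obtain X where "X \<in> C" using C(2) by blast
    moreover have "C \<subseteq> extensions K L F f" using C(1) by (simp add: chains_def)
    ultimately show ?thesis using that unfolding extensions_def by blast
  qed
  have "embedding_over K L R g"
  proof (rule embedding_over_directed_union[OF R0(2)])
    show "R0 \<subseteq> R" "\<forall>a\<in>R0. g a = g0 a" using below[OF R0(1)] by auto
  next
    fix x y assume "x \<in> R" "y \<in> R"
    then obtain R' g' where R': "graph_on R' g' \<in> C" "embedding_over K L R' g'" "x \<in> R'" "y \<in> R'"
      using directed by blast
    then show "\<exists>R' g'. embedding_over K L R' g' \<and> x \<in> R' \<and> y \<in> R' \<and> R' \<subseteq> R \<and>
        (\<forall>a\<in>R'. g a = g' a)"
      using below[OF R'(1)] by (intro exI[of _ R'] exI[of _ g']) simp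
  qed
  moreover have "F \<subseteq> R" "\<forall>a\<in>F. g a = f a" using R0 below[OF R0(1)] by auto
  ultimately show ?thesis unfolding extensions_def union by blast
qed

lemma embedding_over_extends_to_closure:
  assumes sc: "separable_closure K L" and e: "embedding_over K L F f"
  obtains g where "embedding_over K L L g" "\<forall>a\<in>F. g a = f a"
proof -
  have base: "graph_on F f \<in> extensions K L F f" using e unfolding extensions_def by blast
  have "\<forall>C\<in>chains (extensions K L F f). \<exists>U\<in>extensions K L F f. \<forall>X\<in>C. X \<subseteq> U"
  proof
    fix C assume C: "C \<in> chains (extensions K L F f)"
    show "\<exists>U\<in>extensions K L F f. \<forall>X\<in>C. X \<subseteq> U"
    proof (cases "C = {}")
      case False
      show ?thesis by (intro bexI[of _ "\<Union>C"] ballI Union_upper union_chain_extensions[OF C False])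
    qed (use base in blast)
  qed
  then obtain G where G: "G \<in> extensions K L F f"
    and maximal: "\<forall>X\<in>extensions K L F f. G \<subseteq> X \<longrightarrow> X = G"
    using Zorn_Lemma2 by blast
  from G obtain R g where GR: "G = graph_on R g" and g: "embedding_over K L R g" "F \<subseteq> R"
    "\<forall>a\<in>F. g a = f a"
    unfolding extensions_def by blast
  have "L \<subseteq> R"
  proof
    fix z assume "z \<in> L"
    then obtain g' where g': "embedding_over K L (adjoin R z) g'" "\<forall>a\<in>R. g' a = g a"
      using embedding_over_extend_adjoin[OF sc g(1)] by blast
    have R: "subring R" using g(1) by (simp add: embedding_over_def subfield_imp_subring)
    have "graph_on (adjoin R z) g' \<in> extensions K L F f"
      using g' g adjoin_base[OF R] unfolding extensions_def by fastforce
    moreover have "G \<subseteq> graph_on (adjoin R z) g'"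
      using g' adjoin_base[OF R] by (simp add: GR graph_on_subset_iff)
    ultimately have "graph_on (adjoin R z) g' = graph_on R g" using maximal GR by blast
    then show "z \<in> R" using adjoin_gen[OF R] by (metis graph_on_subset_iff subsetD order_refl)
  qed
  then have "R = L" using g(1) by (auto simp: embedding_over_def)
  then show ?thesis using g that by blast
qed

lemma embedding_over_closure_in_galois_group:
  assumes sc: "separable_closure K L" and e: "embedding_over K L L g"
  shows "g \<in> galois_group K L"
proof -
  have K: "subfield K" and L: "subfield L" using sc by (auto simp: separable_closure_def)
  have g: "ring_hom_on L g" "g ` L \<subseteq> L" and gK: "\<forall>k\<in>K. g k = k" and KL: "K \<subseteq> L"
    using e by (auto simp: embedding_over_def)
  have RL: "subring L" using L by (rule subfield_imp_subring)
  have inj: "inj_on g L" using ring_hom_on_inj[OF L g(1)] gK subfield_closed(2)[OF K] by blast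
  have "w \<in> g ` L" if w: "w \<in> L" for w
  proof -
    obtain q where q: "q \<noteq> 0" "poly_over K q" "poly q w = 0"
      using sc w separable_over_imp_algebraic_over
      unfolding separable_closure_def algebraic_over_def by blast
    \<comment> \<open>g permutes the finitely many roots in L of a polynomial over K\<close>
    define Z where "Z = {v \<in> L. poly q v = 0}"
    have "finite Z" unfolding Z_def using poly_roots_finite[OF q(1)] by (rule rev_finite_subset) auto
    moreover have "g ` Z \<subseteq> Z"
    proof
      fix u assume "u \<in> g ` Z"
      then obtain v where v: "v \<in> L" "poly q v = 0" "u = g v" by (auto simp: Z_def)
      have "poly q u = g (poly q v)"
        using poly_map_poly_on[OF g(1) RL poly_over_mono[OF q(2) KL] v(1)] v(3)
          map_poly_fixed[OF q(2) gK subfield_closed(1)[OF K]] by simp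
      then show "u \<in> Z" using v g(2) ring_hom_on_0[OF g(1) RL] by (auto simp: Z_def)
    qed
    moreover have "inj_on g Z" using inj by (rule inj_on_subset) (auto simp: Z_def)
    ultimately have "g ` Z = Z" using endo_inj_surj by blast
    then show ?thesis using w q(3) by (auto simp: Z_def)
  qed
  then have "bij_betw g L L" using inj g(2) by (auto simp: bij_betw_def)
  then show ?thesis using g(1) gK by (simp add: galois_group_def ring_hom_on_def)
qed

lemma galois_group_ring_hom_on:
  assumes "\<sigma> \<in> galois_group K L"
  shows "ring_hom_on L \<sigma>" "\<forall>k\<in>K. \<sigma> k = k"
  using assms by (auto simp: galois_group_def ring_hom_on_def)

lemma id_in_galois_group: "(\<lambda>x. x) \<in> galois_group K L"
  by (simp add: galois_group_def bij_betw_id[unfolded id_def])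

lemma is_minpoly_square_root_neg:
  assumes M: "subfield M" and y: "y \<notin> M" "y^2 \<in> M" and m: "is_minpoly M y p"
  shows "poly p (- y) = 0"
proof -
  define q where "q = [:- (y^2), 0, 1:]"
  have q: "poly_over M q" "poly q y = 0" "poly q (- y) = 0" "degree q = 2"
    using M y by (simp_all add: q_def subfield_closed poly_over_0 subfield_imp_subring power2_eq_square)
  obtain g where g: "poly_over M g" "q = g * p" using is_minpoly_dvd[OF M m q(1,2)] .
  have p: "p \<noteq> 0" "poly_over M p" "poly p y = 0" using m by (auto simp: is_minpoly_def)
  have "degree p \<noteq> 1"
  proof
    assume d: "degree p = 1"
    then have "coeff p 1 \<noteq> 0" using p(1) by (metis leading_coeff_0_iff)
    moreover have "poly p y = coeff p 0 + coeff p 1 * y" using d by (simp add: poly_altdef)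
    ultimately have "y = - coeff p 0 / coeff p 1" using p(3) by (simp add: field_simps add_eq_0_iff)
    then show False using y(1) p(2) M by (simp add: poly_over_def subfield_closed)
  qed
  moreover have "g \<noteq> 0" using g(2) q(4) by auto
  then have "degree q = degree g + degree p" using g(2) p(1) by (simp add: degree_mult_eq)
  ultimately have "degree g = 0" using q(4) is_minpoly_degree[OF m] by linarith
  then obtain c where "g = [:c:]" "c \<noteq> 0" using \<open>g \<noteq> 0\<close> by (metis degree_0_id pCons_eq_0_iff)
  then show ?thesis using q(3) g(2) by simp
qed

lemma galois_group_negates_square_root:
  assumes sc: "separable_closure K L" and M: "subfield M" "K \<subseteq> M" "M \<subseteq> L"
    and y: "y \<in> L" "y \<notin> M" "y^2 \<in> M"
  obtains \<sigma> where "\<sigma> \<in> galois_group K L" "\<forall>a\<in>M. \<sigma> a = a" "\<sigma> y = - y"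
proof -
  have L: "subfield L" using sc by (simp add: separable_closure_def)
  have "poly_over M [:- (y^2), 0, 1:]" "poly [:- (y^2), 0, 1:] y = 0"
    using M y by (simp_all add: subfield_closed poly_over_0 subfield_imp_subring power2_eq_square)
  then obtain p where m: "is_minpoly M y p" using is_minpoly_exists[of "[:- (y^2), 0, 1:]"] by auto
  have "ring_hom_on M (\<lambda>x. x)" by (simp add: ring_hom_on_def)
  moreover have "poly (map_poly (\<lambda>x. x) p) (- y) = 0"
    using is_minpoly_square_root_neg[OF M(1) y(2,3) m] by simp
  ultimately obtain f where f: "ring_hom_on (adjoin M y) f" "\<forall>a\<in>M. f a = a" "f y = - y"
    "f ` adjoin M y \<subseteq> L"
    using extend_hom_adjoin[OF M(1) L _ _ _ m] M(3) y(1) subfield_closed(5)[OF L] by force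
  have RM: "subring M" using M(1) by (rule subfield_imp_subring)
  have "embedding_over K L (adjoin M y) f"
    unfolding embedding_over_def
    using subfield_adjoin[OF sc M y(1)] adjoin_base[OF RM] adjoin_subset[OF subfield_imp_subring[OF L] M(3) y(1)]
      f M(2) by blast
  then obtain \<sigma> where "embedding_over K L L \<sigma>" "\<forall>a\<in>adjoin M y. \<sigma> a = f a"
    using embedding_over_extends_to_closure[OF sc] by blast
  then show ?thesis
    using that embedding_over_closure_in_galois_group[OF sc] f(2,3) adjoin_base[OF RM] adjoin_gen[OF RM]
    by (metis subsetD)
qed

section \<open>Changes of Weierstrass coordinates\<close>

definition iso_params :: "'a::field weierstrass \<Rightarrow> 'a weierstrass \<Rightarrow> 'a \<Rightarrow> 'a \<Rightarrow> 'a \<Rightarrow> 'a \<Rightarrow> bool" where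
  "iso_params E E' u r s t \<longleftrightarrow> (case E of (a1, a2, a3, a4, a6) \<Rightarrow> case E' of (a1', a2', a3', a4', a6') \<Rightarrow>
     u \<noteq> 0 \<and>
     u * a1' = a1 + 2*s \<and>
     u^2 * a2' = a2 - s*a1 + 3*r - s^2 \<and>
     u^3 * a3' = a3 + r*a1 + 2*t \<and>
     u^4 * a4' = a4 - s*a3 + 2*r*a2 - (t + r*s)*a1 + 3*r^2 - 2*s*t \<and>
     u^6 * a6' = a6 + r*a4 + r^2*a2 + r^3 - t*a3 - t^2 - r*t*a1)"

lemma iso_over_iff_iso_params:
  "iso_over K E E' \<longleftrightarrow> (\<exists>u\<in>K. \<exists>r\<in>K. \<exists>s\<in>K. \<exists>t\<in>K. iso_params E E' u r s t)"
  by (cases E; cases E'; simp add: iso_over_def iso_params_def)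

lemma iso_params_nonzero: "iso_params E E' u r s t \<Longrightarrow> u \<noteq> 0"
  by (cases E; cases E'; simp add: iso_params_def)

lemma iso_params_curve_eq:
  fixes a1 a2 a3 a4 a6 b1 b2 b3 b4 b6 u r s t x y :: "'a::field"
  assumes "iso_params (a1, a2, a3, a4, a6) (b1, b2, b3, b4, b6) u r s t"
  shows "(u^3*y + s*u^2*x + t)^2 + a1*(u^2*x + r)*(u^3*y + s*u^2*x + t) + a3*(u^3*y + s*u^2*x + t)
     - ((u^2*x + r)^3 + a2*(u^2*x + r)^2 + a4*(u^2*x + r) + a6)
     = u^6 * (y^2 + b1*x*y + b3*y - (x^3 + b2*x^2 + b4*x + b6))"
  using assms unfolding iso_params_def by simp algebra

lemma discriminant_iso_params:
  assumes "iso_params E E' u r s t"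
  shows "discriminant E = u^12 * discriminant E'"
proof -
  obtain a1 a2 a3 a4 a6 b1 b2 b3 b4 b6 where E: "E = (a1, a2, a3, a4, a6)" "E' = (b1, b2, b3, b4, b6)"
    by (cases E; cases E')
  from assms show ?thesis unfolding E iso_params_def discriminant_def Let_def prod.case
    by (elim conjE) algebra
qed

lemma iso_params_trans:
  assumes "iso_params E1 E2 u r s t" "iso_params E2 E3 u' r' s' t'"
  shows "iso_params E1 E3 (u*u') (r + u^2*r') (s + u*s') (t + u^3*t' + s*u^2*r')"
proof -
  obtain a1 a2 a3 a4 a6 b1 b2 b3 b4 b6 c1 c2 c3 c4 c6 where
    E: "E1 = (a1, a2, a3, a4, a6)" "E2 = (b1, b2, b3, b4, b6)" "E3 = (c1, c2, c3, c4, c6)"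
    by (cases E1; cases E2; cases E3)
  from assms show ?thesis unfolding iso_params_def E prod.case
    by (elim conjE) (intro conjI; algebra)
qed

lemma point_double_Infinity [simp]: "point_double E Infinity = Infinity"
  and point_neg_Infinity [simp]: "point_neg E Infinity = Infinity"
  and point_map_Infinity [simp]: "point_map f Infinity = Infinity"
  by (simp_all add: point_double_def point_neg_def point_map_def)

lemma point_double_affine:
  fixes a1 a2 a3 a4 a6 x y :: "'a::field"
  assumes "y^2 + a1*x*y + a3*y = x^3 + a2*x^2 + a4*x + a6" and "2*y + a1*x + a3 \<noteq> 0"
  defines "l \<equiv> (3*x^2 + 2*a2*x + a4 - a1*y) / (2*y + a1*x + a3)"
  shows "point_double (a1, a2, a3, a4, a6) (Affine x y) =
     Affine (l^2 + a1*l - a2 - 2*x) (- (l + a1)*(l^2 + a1*l - a2 - 2*x) - (y - l*x) - a3)"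
proof -
  have "(a4*x - x^3 + 2*a6 - a3*y) / (2*y + a1*x + a3) = y - l * x"
    using assms by (simp add: field_simps) algebra
  then show ?thesis using assms(2) unfolding point_double_def Let_def l_def by simp
qed

lemma on_curve_point_double:
  assumes S: "subfield S" and a: "a1 \<in> S" "a2 \<in> S" "a3 \<in> S" "a4 \<in> S" "a6 \<in> S"
    and P: "on_curve (a1, a2, a3, a4, a6) S P"
  shows "on_curve (a1, a2, a3, a4, a6) S (point_double (a1, a2, a3, a4, a6) P)"
proof (cases P)
  case (Affine x y)
  from P have xy: "x \<in> S" "y \<in> S" and c: "y^2 + a1*x*y + a3*y = x^3 + a2*x^2 + a4*x + a6"
    by (auto simp: on_curve_def Affine)
  show ?thesis
  proof (cases "2*y + a1*x + a3 = 0")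
    case False
    define l where "l = (3*x^2 + 2*a2*x + a4 - a1*y) / (2*y + a1*x + a3)"
    have "l * (2*y + a1*x + a3) = 3*x^2 + 2*a2*x + a4 - a1*y" using False by (simp add: l_def)
    then have "(- (l + a1)*(l^2 + a1*l - a2 - 2*x) - (y - l*x) - a3)^2
        + a1*(l^2 + a1*l - a2 - 2*x)*(- (l + a1)*(l^2 + a1*l - a2 - 2*x) - (y - l*x) - a3)
        + a3*(- (l + a1)*(l^2 + a1*l - a2 - 2*x) - (y - l*x) - a3)
      = (l^2 + a1*l - a2 - 2*x)^3 + a2*(l^2 + a1*l - a2 - 2*x)^2 + a4*(l^2 + a1*l - a2 - 2*x) + a6"
      using c by algebra
    moreover have "l \<in> S" unfolding l_def using a xy S by (simp add: subfield_closed)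
    ultimately show ?thesis using point_double_affine[OF c False] a xy S
      by (simp add: on_curve_def Affine l_def subfield_closed)
  qed (simp add: Affine point_double_def on_curve_def)
qed (simp add: on_curve_def)

definition change_coords :: "'a::field \<Rightarrow> 'a \<Rightarrow> 'a \<Rightarrow> 'a \<Rightarrow> 'a point \<Rightarrow> 'a point" where
  "change_coords u r s t P = (case P of Infinity \<Rightarrow> Infinity
      | Affine x y \<Rightarrow> Affine (u^2*x + r) (u^3*y + s*u^2*x + t))"

lemma change_coords_Infinity [simp]: "change_coords u r s t Infinity = Infinity"
  and change_coords_Affine [simp]:
    "change_coords u r s t (Affine x y) = Affine (u^2*x + r) (u^3*y + s*u^2*x + t)"
  by (simp_all add: change_coords_def)

lemma change_coords_eq_Infinity_iff [simp]: "change_coords u r s t P = Infinity \<longleftrightarrow> P = Infinity"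
  by (cases P) simp_all

lemma change_coords_inj:
  assumes "u \<noteq> 0" "change_coords u r s t P = change_coords u r s t Q"
  shows "P = Q"
  using assms by (cases P; cases Q) auto

lemma change_coords_surj:
  assumes "u \<noteq> 0"
  obtains P where "Q = change_coords u r s t P"
proof (cases Q)
  case (Affine X Y)
  then have "Q = change_coords u r s t (Affine ((X - r) / u^2) ((Y - s*(X - r) - t) / u^3))"
    using assms by simp
  then show ?thesis using that by blast
qed (use that[of Infinity] in simp)

lemma on_curve_change_coords_iff:
  assumes iso: "iso_params E E' u r s t" and S: "subfield S" "u \<in> S" "r \<in> S" "s \<in> S" "t \<in> S"
  shows "on_curve E S (change_coords u r s t P) \<longleftrightarrow> on_curve E' S P"
proof (cases P)
  case (Affine x y)
  obtain a1 a2 a3 a4 a6 b1 b2 b3 b4 b6 where E: "E = (a1, a2, a3, a4, a6)" "E' = (b1, b2, b3, b4, b6)"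
    by (cases E; cases E')
  have u: "u \<noteq> 0" using iso_params_nonzero[OF iso] .
  have "x = (u^2*x + r - r) / u^2" "y = (u^3*y + s*u^2*x + t - s*u^2*x - t) / u^3" using u by simp_all
  then have coords: "u^2*x + r \<in> S \<and> u^3*y + s*u^2*x + t \<in> S \<longleftrightarrow> x \<in> S \<and> y \<in> S"
    using S by (metis subfield_closed)
  have scaled: "A = B \<longleftrightarrow> C = D" if "A - B = c * (C - D)" "c \<noteq> 0" for A B C D c :: 'a
    using that by (metis eq_iff_diff_eq_0 mult_eq_0_iff)
  show ?thesis
    using scaled[OF iso_params_curve_eq[OF iso[unfolded E], of y x]] u coords
    by (simp add: on_curve_def Affine E) blast
qed (simp add: on_curve_def)

lemma point_double_change_coords:
  assumes iso: "iso_params E E' u r s t" and P: "on_curve E' S P"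
  shows "point_double E (change_coords u r s t P) = change_coords u r s t (point_double E' P)"
proof (cases P)
  case (Affine x y)
  obtain a1 a2 a3 a4 a6 b1 b2 b3 b4 b6 where E: "E = (a1, a2, a3, a4, a6)" "E' = (b1, b2, b3, b4, b6)"
    by (cases E; cases E')
  have u: "u \<noteq> 0" using iso_params_nonzero[OF iso] .
  have a: "u * b1 = a1 + 2*s" "u^2 * b2 = a2 - s*a1 + 3*r - s^2" "u^3 * b3 = a3 + r*a1 + 2*t"
    using iso by (simp_all add: iso_params_def E)
  have c': "y^2 + b1*x*y + b3*y = x^3 + b2*x^2 + b4*x + b6"
    using P by (simp add: on_curve_def Affine E)
  define X where "X = u^2*x + r"
  define Y where "Y = u^3*y + s*u^2*x + t"
  have c: "Y^2 + a1*X*Y + a3*Y = X^3 + a2*X^2 + a4*X + a6"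
    using iso_params_curve_eq[OF iso[unfolded E], of y x] c' unfolding X_def Y_def by simp
  have d: "2*Y + a1*X + a3 = u^3 * (2*y + b1*x + b3)"
    unfolding X_def Y_def using a by algebra
  show ?thesis
  proof (cases "2*y + b1*x + b3 = 0")
    case True
    then show ?thesis using d by (simp add: Affine E point_double_def flip: X_def Y_def)
  next
    case False
    have d0: "2*Y + a1*X + a3 \<noteq> 0" using d False u by simp
    define l' where "l' = (3*x^2 + 2*b2*x + b4 - b1*y) / (2*y + b1*x + b3)"
    define l where "l = (3*X^2 + 2*a2*X + a4 - a1*Y) / (2*Y + a1*X + a3)"
    have "l * (2*Y + a1*X + a3) = 3*X^2 + 2*a2*X + a4 - a1*Y" using d0 by (simp add: l_def)
    moreover have "l' * (2*y + b1*x + b3) = 3*x^2 + 2*b2*x + b4 - b1*y" using False by (simp add: l'_def)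
    moreover have "u^4 * b4 = a4 - s*a3 + 2*r*a2 - (t + r*s)*a1 + 3*r^2 - 2*s*t"
      using iso by (simp add: iso_params_def E)
    ultimately have "l * (2*Y + a1*X + a3) = (u*l' + s) * (2*Y + a1*X + a3)"
      using a d unfolding X_def Y_def by algebra
    then have l: "l = u*l' + s" using d0 by simp
    have "point_double E (change_coords u r s t P) =
        Affine (l^2 + a1*l - a2 - 2*X) (- (l + a1)*(l^2 + a1*l - a2 - 2*X) - (Y - l*X) - a3)"
      using point_double_affine[OF c d0] by (simp add: Affine E l_def flip: X_def Y_def)
    also have "\<dots> = change_coords u r s t
        (Affine (l'^2 + b1*l' - b2 - 2*x) (- (l' + b1)*(l'^2 + b1*l' - b2 - 2*x) - (y - l'*x) - b3))"
      unfolding change_coords_Affine point.inject l X_def Y_def using a by (intro conjI; algebra)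
    also have "\<dots> = change_coords u r s t (point_double E' P)"
      using point_double_affine[OF c' False] by (simp add: Affine E l'_def)
    finally show ?thesis .
  qed
qed simp

lemma on_curve_UNIV: "on_curve E S P \<Longrightarrow> on_curve E UNIV P"
  by (cases P; cases E) (simp_all add: on_curve_def)

lemma subfield_UNIV: "subfield (UNIV :: 'a::field set)"
  by (simp add: subfield_def)

lemma point_double_twice_change_coords:
  assumes iso: "iso_params E E' u r s t" and P: "on_curve E' S P"
  shows "point_double E (point_double E (change_coords u r s t P)) =
    change_coords u r s t (point_double E' (point_double E' P))"
proof -
  obtain b1 b2 b3 b4 b6 where E': "E' = (b1, b2, b3, b4, b6)" by (cases E')
  \<comment> \<open>over UNIV the coefficients of E' need not be tracked\<close>
  have "on_curve E' UNIV P" using on_curve_UNIV[OF P] .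
  moreover have "on_curve E' UNIV (point_double E' P)"
    using on_curve_point_double[OF subfield_UNIV _ _ _ _ _ calculation[unfolded E']] by (simp add: E')
  ultimately show ?thesis using point_double_change_coords[OF iso] by simp
qed

lemma point_neg_change_coords:
  assumes "iso_params E E' u r s t"
  shows "point_neg E (change_coords u r s t P) = change_coords u r s t (point_neg E' P)"
proof (cases P)
  case (Affine x y)
  obtain a1 a2 a3 a4 a6 b1 b2 b3 b4 b6 where E: "E = (a1, a2, a3, a4, a6)" "E' = (b1, b2, b3, b4, b6)"
    by (cases E; cases E')
  have "u * b1 = a1 + 2*s" "u^3 * b3 = a3 + r*a1 + 2*t"
    using assms by (simp_all add: iso_params_def E)
  then show ?thesis unfolding Affine E point_neg_def by simp algebra
qed simp

lemma point_map_change_coords: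
  assumes \<sigma>: "ring_hom_on L \<sigma>" and L: "subfield L" "u \<in> L" "r \<in> L" "s \<in> L" "t \<in> L"
    and fixed: "\<sigma> u = u" "\<sigma> r = r" "\<sigma> s = s" "\<sigma> t = t" and P: "on_curve E L P"
  shows "point_map \<sigma> (change_coords u r s t P) = change_coords u r s t (point_map \<sigma> P)"
proof (cases P)
  case (Affine x y)
  with P have "x \<in> L" "y \<in> L" by (auto simp: on_curve_def)
  then show ?thesis using L fixed
    by (simp add: Affine point_map_def power2_eq_square power3_eq_cube subfield_closed
        ring_hom_on_add[OF \<sigma>] ring_hom_on_mult[OF \<sigma>])
qed simp

section \<open>The curves y^2 = (x - a)(x - b)(x - c)\<close>

lemma cubic_curve_swap: "cubic_curve a b c = cubic_curve b a c"
  and cubic_curve_rotate: "cubic_curve a b c = cubic_curve b c a"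
  by (simp_all add: cubic_curve_def algebra_simps)

lemma discriminant_cubic_curve: "discriminant (cubic_curve a b c) = 16 * ((a - b) * (b - c) * (c - a))^2"
  unfolding discriminant_def cubic_curve_def Let_def by simp algebra

lemma cubic_curve_distinct:
  assumes "elliptic_curve K E" "iso_params E (cubic_curve a b c) u r s t"
  shows "a \<noteq> b" "b \<noteq> c" "a \<noteq> c"
  using discriminant_iso_params[OF assms(2)] assms(1)
  by (auto simp: elliptic_curve_def discriminant_cubic_curve)

lemma on_curve_cubic_curve:
  "on_curve (cubic_curve a b c) S (Affine x y) \<longleftrightarrow> x \<in> S \<and> y \<in> S \<and> y^2 = (x - a)*(x - b)*(x - c)"
proof -
  have "(x - a)*(x - b)*(x - c) = x^3 + (- (a + b + c))*x^2 + (a*b + b*c + c*a)*x + (- (a*b*c))"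
    by (simp add: algebra_simps power2_eq_square power3_eq_cube)
  then show ?thesis by (simp add: cubic_curve_def on_curve_def)
qed

lemma point_neg_cubic_curve: "point_neg (cubic_curve a b c) (Affine x y) = Affine x (- y)"
  by (simp add: point_neg_def cubic_curve_def)

lemma point_double_cubic_curve_Infinity_iff:
  "point_double (cubic_curve a b c) (Affine x y) = Infinity \<longleftrightarrow> 2*y = 0"
  by (simp add: point_double_def cubic_curve_def Let_def)

lemma point_double_cubic_curve:
  assumes c: "y^2 = (x - a)*(x - b)*(x - c)" and y: "2*y \<noteq> 0"
  defines "l \<equiv> (3*x^2 - 2*(a + b + c)*x + (a*b + b*c + c*a)) / (2*y)"
  shows "point_double (cubic_curve a b c) (Affine x y) =
     Affine (l^2 + (a + b + c) - 2*x) (- l*(l^2 + (a + b + c) - 2*x) - (y - l*x))"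
proof -
  have "y^2 + 0*x*y + 0*y = x^3 + (- (a + b + c))*x^2 + (a*b + b*c + c*a)*x + (- (a*b*c))"
    using c by (simp add: algebra_simps power2_eq_square power3_eq_cube)
  from point_double_affine[OF this] y show ?thesis
    unfolding cubic_curve_def l_def by (simp add: algebra_simps)
qed

lemma cubic_curve_two_torsion:
  fixes a b c :: "'a::field"
  assumes "(2::'a) \<noteq> 0" and P: "on_curve (cubic_curve a b c) S P"
    and "point_double (cubic_curve a b c) P = Infinity"
  shows "P = Infinity \<or> (\<exists>e\<in>{a, b, c}. P = Affine e 0)"
proof (cases P)
  case (Affine x y)
  then have "y = 0" using assms by (simp add: point_double_cubic_curve_Infinity_iff)
  then show ?thesis using P by (simp add: Affine on_curve_cubic_curve)
qed simp

lemma on_curve_cubic_curve_point_double: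
  assumes S: "subfield S" "a \<in> S" "b \<in> S" "c \<in> S" and P: "on_curve (cubic_curve a b c) S P"
  shows "on_curve (cubic_curve a b c) S (point_double (cubic_curve a b c) P)"
proof -
  have "0 \<in> S" "- (a + b + c) \<in> S" "a*b + b*c + c*a \<in> S" "- (a*b*c) \<in> S"
    using S by (simp_all add: subfield_closed)
  from on_curve_point_double[OF S(1) this(1,2,1,3,4) P[unfolded cubic_curve_def]] show ?thesis
    by (simp only: cubic_curve_def)
qed

lemma point_double_cubic_curve_eq_iff:
  fixes a b c :: "'a::field"
  assumes char: "(2::'a) \<noteq> 0" and S: "subfield S" "a \<in> S" "b \<in> S" "c \<in> S"
    and P: "on_curve (cubic_curve a b c) S (Affine x y)" "y \<noteq> 0"
  shows "point_double (cubic_curve a b c) (Affine x y) = Affine a 0 \<longleftrightarrow> (x - a)^2 = (a - b)*(a - c)"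
proof -
  have c: "y^2 = (x - a)*(x - b)*(x - c)" using P by (simp add: on_curve_cubic_curve)
  have y: "2*y \<noteq> 0" using P(2) char by simp
  define l where "l = (3*x^2 - 2*(a + b + c)*x + (a*b + b*c + c*a)) / (2*y)"
  define x3 where "x3 = l^2 + (a + b + c) - 2*x"
  define y3 where "y3 = - l*x3 - (y - l*x)"
  have double: "point_double (cubic_curve a b c) (Affine x y) = Affine x3 y3"
    using point_double_cubic_curve[OF c y] by (simp add: x3_def y3_def l_def)
  have "y3^2 = (x3 - a)*(x3 - b)*(x3 - c)"
    using on_curve_cubic_curve_point_double[OF S P(1)] by (simp add: double on_curve_cubic_curve)
  moreover have "l * (2*y) = 3*x^2 - 2*(a + b + c)*x + (a*b + b*c + c*a)" using y by (simp add: l_def)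
  then have "4*y^2*(x3 - a) = ((x - a)^2 - (a - b)*(a - c))^2"
    using c unfolding x3_def by algebra
  moreover have "(4::'a) \<noteq> 0" using char by (metis mult_2_right mult_eq_0_iff numeral_Bit0)
  ultimately show ?thesis using P(2) by (auto simp: double)
qed

lemma cubic_curve_four_torsion:
  fixes a b c :: "'a::field"
  assumes char: "(2::'a) \<noteq> 0" and S: "subfield S" "a \<in> S" "b \<in> S" "c \<in> S"
    and P: "on_curve (cubic_curve a b c) S (Affine x y)" "y \<noteq> 0"
    and PP: "point_double (cubic_curve a b c) (point_double (cubic_curve a b c) (Affine x y)) = Infinity"
  shows "(x - a)^2 = (a - b)*(a - c) \<or> (x - b)^2 = (b - a)*(b - c) \<or> (x - c)^2 = (c - a)*(c - b)"
proof -
  have "point_double (cubic_curve a b c) (Affine x y) \<noteq> Infinity"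
    using P(2) char by (simp add: point_double_cubic_curve_Infinity_iff)
  then have "point_double (cubic_curve a b c) (Affine x y) \<in> {Affine a 0, Affine b 0, Affine c 0}"
    using cubic_curve_two_torsion[OF char on_curve_cubic_curve_point_double[OF S P(1)] PP] by auto
  moreover have "point_double (cubic_curve a b c) (Affine x y) = Affine b 0 \<longleftrightarrow> (x - b)^2 = (b - a)*(b - c)"
    using point_double_cubic_curve_eq_iff[OF char S(1,3,2,4)] P by (simp flip: cubic_curve_swap)
  moreover have "point_double (cubic_curve a b c) (Affine x y) = Affine c 0 \<longleftrightarrow> (x - c)^2 = (c - a)*(c - b)"
    using point_double_cubic_curve_eq_iff[OF char S(1,4,2,3)] P by (simp flip: cubic_curve_rotate)
  ultimately show ?thesis using point_double_cubic_curve_eq_iff[OF char S P] by auto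
qed

text \<open>The multipliers are the cofactors of the Sylvester matrix of f and f', so the combination
  is the resultant, i.e. the discriminant up to a constant.\<close>
lemma separable_cubic:
  fixes p q r :: "'a::field"
  assumes "discriminant (0, p, 0, q, r) \<noteq> 0"
  shows "coprime [:r, q, p, 1:] (pderiv [:r, q, p, 1:])"
proof (rule is_unit_combination_imp_coprime)
  define A where "A = smult (-16) [:27*r - 15*p*q + 4*p^3, 6*p^2 - 18*q:]"
  define B where "B = smult (-16) [:4*q^2 - 3*p*r - p^2*q, 7*p*q - 9*r - 2*p^3, 6*q - 2*p^2:]"
  have "A * [:r, q, p, 1:] + B * pderiv [:r, q, p, 1:] = [:discriminant (0, p, 0, q, r):]"
    unfolding A_def B_def by (simp add: pderiv_pCons discriminant_def Let_def) algebra
  then show "is_unit (A * [:r, q, p, 1:] + B * pderiv [:r, q, p, 1:])"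
    using assms by (simp add: is_unit_pCons_iff)
qed

lemma separably_closed_root_of_coeffs:
  assumes "separably_closed L" "poly_over L p" "degree p \<ge> 1" "coprime p (pderiv p)"
  obtains x where "x \<in> L" "poly p x = 0"
  using assms unfolding separably_closed_def poly_over_def by blast

lemma separably_closed_square_root:
  fixes D :: "'a::field"
  assumes L: "subfield L" "separably_closed L" and char: "(2::'a) \<noteq> 0" and D: "D \<in> L" "D \<noteq> 0"
  obtains v where "v \<in> L" "v^2 = D"
proof -
  have "[:- 1 / D:] * [:- D, 0, 1:] + [:0, 1 / (2 * D):] * pderiv [:- D, 0, 1:] = 1"
    using D char by (simp add: pderiv_pCons field_simps one_pCons)
  then have "coprime [:- D, 0, 1:] (pderiv [:- D, 0, 1:])"
    by (metis is_unit_combination_imp_coprime one_dvd)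
  moreover have "poly_over L [:- D, 0, 1:]"
    using L D by (simp add: subfield_closed poly_over_0 subfield_imp_subring)
  moreover have "degree [:- D, 0, 1:] \<ge> 1" by simp
  ultimately obtain v where "v \<in> L" "poly [:- D, 0, 1:] v = 0"
    using separably_closed_root_of_coeffs[OF L(2)] by blast
  then show ?thesis using that by (simp add: power2_eq_square)
qed

lemma exists_short_model:
  fixes E :: "'a::field weierstrass"
  assumes char: "(2::'a) \<noteq> 0" and K: "subfield K" and ell: "elliptic_curve K E"
  obtains p q r s t where "p \<in> K" "q \<in> K" "r \<in> K" "s \<in> K" "t \<in> K"
    "iso_params E (0, p, 0, q, r) 1 0 s t" "discriminant (0, p, 0, q, r) \<noteq> 0"
proof -
  obtain a1 a2 a3 a4 a6 where E: "E = (a1, a2, a3, a4, a6)" by (cases E)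
  have aK: "a1 \<in> K" "a2 \<in> K" "a3 \<in> K" "a4 \<in> K" "a6 \<in> K" and disc: "discriminant E \<noteq> 0"
    using ell by (auto simp: elliptic_curve_def E)
  \<comment> \<open>completing the square in y\<close>
  define s where "s = - a1 / 2"
  define t where "t = - a3 / 2"
  define p where "p = a2 - s*a1 - s^2"
  define q where "q = a4 - s*a3 - t*a1 - 2*s*t"
  define r where "r = a6 - t*a3 - t^2"
  have "s \<in> K" "t \<in> K" using aK K by (simp_all add: s_def t_def subfield_closed)
  moreover have "p \<in> K" "q \<in> K" "r \<in> K"
    using aK calculation K by (auto simp: p_def q_def r_def subfield_closed)
  moreover have iso: "iso_params E (0, p, 0, q, r) 1 0 s t"
    unfolding iso_params_def E prod.case using char
    by (simp add: s_def t_def p_def q_def r_def field_simps)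
  moreover have "discriminant (0, p, 0, q, r) \<noteq> 0" using discriminant_iso_params[OF iso] disc by simp
  ultimately show ?thesis using that by blast
qed

lemma separably_closed_split_cubic:
  assumes L: "subfield L" "separably_closed L" and pqr: "p \<in> L" "q \<in> L" "r \<in> L"
    and disc: "discriminant (0, p, 0, q, r) \<noteq> 0"
  obtains a b c where "a \<in> L" "b \<in> L" "c \<in> L" "(0, p, 0, q, r) = cubic_curve a b c"
proof -
  have sep: "coprime [:r, q, p, 1:] (pderiv [:r, q, p, 1:])" using disc by (rule separable_cubic)
  moreover have "poly_over L [:r, q, p, 1:]"
    using pqr L by (simp add: subfield_closed poly_over_0 subfield_imp_subring)
  moreover have "degree [:r, q, p, 1:] \<ge> 1" by simp
  ultimately obtain a where a: "a \<in> L" "poly [:r, q, p, 1:] a = 0"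
    using separably_closed_root_of_coeffs[OF L(2)] by blast
  define g where "g = [:q + a*p + a^2, p + a, 1:]"
  have "[:r, q, p, 1:] = [:- a, 1:] * g"
    using a(2) by (simp add: g_def algebra_simps power2_eq_square power3_eq_cube) algebra
  then have "coprime g (pderiv g)" using coprime_pderiv_dvd[OF _ sep] by (metis dvd_triv_right)
  moreover have "poly_over L g"
    using pqr a L by (simp add: g_def subfield_closed poly_over_0 subfield_imp_subring)
  moreover have "degree g \<ge> 1" by (simp add: g_def)
  ultimately obtain b where b: "b \<in> L" "poly g b = 0"
    using separably_closed_root_of_coeffs[OF L(2)] by blast
  define c where "c = - (p + a) - b"
  have "c \<in> L" using a b pqr L by (simp add: c_def subfield_closed)
  moreover have "(0, p, 0, q, r) = cubic_curve a b c"
    using a(2) b(2) unfolding cubic_curve_def c_def g_def by simp algebra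
  ultimately show ?thesis using that a(1) b(1) by blast
qed

lemma exists_cubic_model:
  fixes E :: "'a::field weierstrass"
  assumes char: "(2::'a) \<noteq> 0" and sc: "separable_closure K L" and ell: "elliptic_curve K E"
  obtains a b c s t where "a \<in> L" "b \<in> L" "c \<in> L" "s \<in> K" "t \<in> K"
    "iso_params E (cubic_curve a b c) 1 0 s t"
proof -
  have K: "subfield K" and L: "subfield L" "separably_closed L" and KL: "K \<subseteq> L"
    using sc by (auto simp: separable_closure_def)
  obtain p q r s t where pqr: "p \<in> K" "q \<in> K" "r \<in> K" and st: "s \<in> K" "t \<in> K"
    and iso: "iso_params E (0, p, 0, q, r) 1 0 s t" and disc: "discriminant (0, p, 0, q, r) \<noteq> 0"
    using exists_short_model[OF char K ell] .
  obtain a b c where "a \<in> L" "b \<in> L" "c \<in> L" "(0, p, 0, q, r) = cubic_curve a b c"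
    using separably_closed_split_cubic[OF L _ _ _ disc] pqr KL by blast
  then show ?thesis using that st iso by metis
qed

section \<open>Galois orbits of 4-torsion points\<close>

definition quad_ext :: "'a::field set \<Rightarrow> 'a \<Rightarrow> 'a set" where
  "quad_ext K v = {k1 + k2 * v | k1 k2. k1 \<in> K \<and> k2 \<in> K}"

lemma quad_ext_memI: "k1 \<in> K \<Longrightarrow> k2 \<in> K \<Longrightarrow> k1 + k2 * v \<in> quad_ext K v"
  unfolding quad_ext_def by blast

lemma quad_ext_base: "subfield K \<Longrightarrow> k \<in> K \<Longrightarrow> k \<in> quad_ext K v"
  using quad_ext_memI[of k K 0 v] by (simp add: subfield_closed)

lemma quad_ext_gen: "subfield K \<Longrightarrow> v \<in> quad_ext K v"
  using quad_ext_memI[of 0 K 1 v] by (simp add: subfield_closed)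

lemma subfield_quad_ext:
  assumes sc: "separable_closure K L" and v: "v \<in> L" "v^2 \<in> K"
  shows "subfield (quad_ext K v)" "quad_ext K v \<subseteq> L"
proof -
  have K: "subfield K" and L: "subfield L" and KL: "K \<subseteq> L"
    using sc by (auto simp: separable_closure_def)
  show sub: "quad_ext K v \<subseteq> L"
    using L KL v by (auto simp: quad_ext_def intro!: subfield_closed(3,4))
  have "subring (quad_ext K v)"
    unfolding subring_def
  proof (intro conjI ballI)
    show "0 \<in> quad_ext K v" "1 \<in> quad_ext K v" using K quad_ext_base subfield_closed by blast+
  next
    fix x y assume "x \<in> quad_ext K v" "y \<in> quad_ext K v"
    then obtain k1 k2 m1 m2 where k: "k1 \<in> K" "k2 \<in> K" "x = k1 + k2 * v"
      and m: "m1 \<in> K" "m2 \<in> K" "y = m1 + m2 * v"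
      unfolding quad_ext_def by blast
    have "x + y = (k1 + m1) + (k2 + m2) * v" "- x = (- k1) + (- k2) * v"
      "x * y = (k1 * m1 + k2 * m2 * v^2) + (k1 * m2 + k2 * m1) * v"
      using k(3) m(3) by (simp_all add: algebra_simps power2_eq_square)
    moreover have "k1 + m1 \<in> K" "k2 + m2 \<in> K" "- k1 \<in> K" "- k2 \<in> K"
      "k1 * m1 + k2 * m2 * v^2 \<in> K" "k1 * m2 + k2 * m1 \<in> K"
      using k(1,2) m(1,2) K v(2) by (simp_all add: subfield_closed)
    ultimately show "x + y \<in> quad_ext K v" "x * y \<in> quad_ext K v" "- x \<in> quad_ext K v"
      by (simp_all only: quad_ext_memI)
  qed
  moreover have "\<forall>x\<in>quad_ext K v. algebraic_over K x"
    using sub sc separable_over_imp_algebraic_over unfolding separable_closure_def by blast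
  ultimately show "subfield (quad_ext K v)"
    using subring_algebraic_imp_subfield[OF K] quad_ext_base[OF K] by blast
qed

lemma quad_ext_square_root_imp_square:
  fixes \<alpha> \<beta> v s :: "'a::field"
  assumes K: "subfield K" and char: "(2::'a) \<noteq> 0"
    and \<alpha>: "\<alpha> \<in> K" "\<alpha> \<noteq> 0" and \<beta>: "\<beta> \<in> K" and v: "v^2 = \<alpha> * \<beta>"
    and s: "s \<in> quad_ext K v" "s^2 = \<alpha>"
  shows "nonzero_square K \<alpha> \<or> nonzero_square K \<beta>"
proof -
  obtain m1 m2 where m: "m1 \<in> K" "m2 \<in> K" "s = m1 + m2 * v" using s(1) by (auto simp: quad_ext_def)
  have expand: "\<alpha> = (m1^2 + m2^2 * (\<alpha> * \<beta>)) + 2 * m1 * m2 * v"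
    using s(2) m(3) v by (simp add: algebra_simps power2_eq_square)
  show ?thesis
  proof (cases "v \<in> K")
    case True
    then have "s \<in> K" "s \<noteq> 0" using m K s(2) \<alpha>(2) by (auto simp: subfield_closed)
    then show ?thesis using s(2) by (auto simp: nonzero_square_def)
  next
    case False
    have "m1 * m2 = 0"
    proof (rule ccontr)
      assume "m1 * m2 \<noteq> 0"
      then have "v = (\<alpha> - (m1^2 + m2^2 * (\<alpha> * \<beta>))) / (2 * m1 * m2)"
        using expand char by (simp add: field_simps)
      then show False using False m \<alpha> \<beta> K by (simp add: subfield_closed)
    qed
    then consider "m1 = 0" | "m2 = 0" by auto
    then show ?thesis
    proof cases
      case 1
      then have "\<beta> * m2^2 = 1" using expand \<alpha>(2) by (simp add: algebra_simps)
      moreover from this have "m2 \<noteq> 0" by auto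
      ultimately have "\<beta> = (1 / m2)^2" "m2 \<noteq> 0" by (simp_all add: field_simps)
      moreover have "1 / m2 \<in> K" using m(2) K by (simp add: subfield_closed)
      ultimately have "nonzero_square K \<beta>"
        unfolding nonzero_square_def by (intro bexI[of _ "1 / m2"]) simp_all
      then show ?thesis ..
    next
      case 2
      then show ?thesis using expand \<alpha>(2) m(1) by (auto simp: nonzero_square_def)
    qed
  qed
qed

lemma galois_group_negates_ordinate:
  fixes a b c x y :: "'a::field"
  assumes sc: "separable_closure K L" and char: "(2::'a) \<noteq> 0"
    and e: "a \<in> K" "b \<in> K" "c \<in> K" "a \<noteq> b" "a \<noteq> c"
    and ns: "\<not> nonzero_square K (a - b)" "\<not> nonzero_square K (a - c)"
    and xy: "x \<in> L" "y \<in> L" "y \<noteq> 0" "y^2 = (x - a)*(x - b)*(x - c)"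
    and half: "(x - a)^2 = (a - b)*(a - c)"
  obtains \<sigma> where "\<sigma> \<in> galois_group K L" "\<sigma> x = x" "\<sigma> y = - y"
proof -
  have K: "subfield K" and L: "subfield L" and KL: "K \<subseteq> L" using sc by (auto simp: separable_closure_def)
  define v where "v = x - a"
  define \<alpha> where "\<alpha> = a - b"
  define \<beta> where "\<beta> = a - c"
  have \<alpha>\<beta>: "\<alpha> \<in> K" "\<beta> \<in> K" "\<alpha> \<noteq> 0" using e K by (auto simp: \<alpha>_def \<beta>_def subfield_closed)
  have v: "v \<in> L" "v^2 = \<alpha> * \<beta>" using xy e KL L half by (auto simp: v_def \<alpha>_def \<beta>_def subfield_closed)
  then have vK: "v^2 \<in> K" using \<alpha>\<beta> K by (simp add: subfield_closed)
  define M where "M = quad_ext K v"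
  have M: "subfield M" "K \<subseteq> M" "M \<subseteq> L"
    using subfield_quad_ext[OF sc v(1) vK] quad_ext_base[OF K] by (auto simp: M_def)
  have y2: "y^2 = v * (v + \<alpha>) * (v + \<beta>)" using xy(4) by (simp add: v_def \<alpha>_def \<beta>_def algebra_simps)
  have "y^2 = (\<alpha> + \<beta>) * (\<alpha> * \<beta>) + (2 * (\<alpha> * \<beta>)) * v"
    using y2 v(2) by (simp add: algebra_simps power2_eq_square power3_eq_cube)
  then have "y^2 \<in> M" unfolding M_def using \<alpha>\<beta> K by (simp add: quad_ext_memI subfield_closed)
  moreover have "y \<notin> M"
  proof
    assume "y \<in> M"
    \<comment> \<open>then \<alpha> would be a square in M\<close>
    have "\<alpha> * y^2 = (v * (v + \<alpha>))^2" using y2 v(2) by algebra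
    then have "(v * (v + \<alpha>) / y)^2 = \<alpha>" using xy(3) by (simp add: field_simps power2_eq_square)
    moreover have "v * (v + \<alpha>) / y \<in> M"
      using \<open>y \<in> M\<close> M \<alpha>\<beta> quad_ext_gen[OF K] by (auto simp: M_def subfield_closed)
    ultimately show False
      using quad_ext_square_root_imp_square[OF K char \<alpha>\<beta>(1,3,2) v(2)] ns
      by (simp add: M_def \<alpha>_def \<beta>_def)
  qed
  ultimately obtain \<sigma> where "\<sigma> \<in> galois_group K L" "\<forall>m\<in>M. \<sigma> m = m" "\<sigma> y = - y"
    using galois_group_negates_square_root[OF sc M xy(2)] by blast
  moreover have "x \<in> M" using quad_ext_memI[of a K 1 v] e(1) K by (simp add: M_def v_def subfield_closed)
  ultimately show ?thesis using that by blast
qed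

definition some_difference_square :: "'a::field set \<Rightarrow> 'a \<Rightarrow> 'a \<Rightarrow> 'a \<Rightarrow> bool" where
  "some_difference_square K a b c \<longleftrightarrow>
     nonzero_square K (a - b) \<or> nonzero_square K (b - a) \<or>
     nonzero_square K (b - c) \<or> nonzero_square K (c - b) \<or>
     nonzero_square K (c - a) \<or> nonzero_square K (a - c)"

definition four_torsion_orbit_avoids_neg :: "'a::field set \<Rightarrow> 'a set \<Rightarrow> 'a weierstrass \<Rightarrow> bool" where
  "four_torsion_orbit_avoids_neg K L E \<longleftrightarrow>
     (\<exists>P. on_curve E L P \<and> point_double E (point_double E P) = Infinity \<and>
          (\<forall>\<sigma>\<in>galois_group K L. point_map \<sigma> P \<noteq> point_neg E P))"

lemma cubic_curve_four_torsion_orbit_meets_neg: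
  fixes a b c :: "'a::field"
  assumes sc: "separable_closure K L" and char: "(2::'a) \<noteq> 0"
    and abc: "a \<in> K" "b \<in> K" "c \<in> K" "a \<noteq> b" "b \<noteq> c" "a \<noteq> c"
    and ns: "\<not> some_difference_square K a b c"
    and P: "on_curve (cubic_curve a b c) L P"
    and PP: "point_double (cubic_curve a b c) (point_double (cubic_curve a b c) P) = Infinity"
  obtains \<sigma> where "\<sigma> \<in> galois_group K L" "point_map \<sigma> P = point_neg (cubic_curve a b c) P"
proof (cases P)
  case (Affine x y)
  have L: "subfield L" and KL: "K \<subseteq> L" using sc by (auto simp: separable_closure_def)
  have xy: "x \<in> L" "y \<in> L" "y^2 = (x - a)*(x - b)*(x - c)"
    using P by (simp_all add: Affine on_curve_cubic_curve)
  show ?thesis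
  proof (cases "y = 0")
    case False
    have abcL: "a \<in> L" "b \<in> L" "c \<in> L" using abc KL by auto
    have "\<exists>\<sigma>\<in>galois_group K L. \<sigma> x = x \<and> \<sigma> y = - y"
      using cubic_curve_four_torsion[OF char L abcL P[unfolded Affine] False PP[unfolded Affine]]
    proof (elim disjE)
      assume "(x - a)^2 = (a - b)*(a - c)"
      with galois_group_negates_ordinate[OF sc char abc(1,2,3,4,6) _ _ xy(1,2) False xy(3)] ns
      show ?thesis unfolding some_difference_square_def by metis
    next
      assume "(x - b)^2 = (b - a)*(b - c)"
      moreover have "y^2 = (x - b)*(x - a)*(x - c)" using xy(3) by (simp add: algebra_simps)
      ultimately show ?thesis
        using galois_group_negates_ordinate[OF sc char abc(2,1,3) abc(4)[symmetric] abc(5) _ _ xy(1,2) False] ns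
        unfolding some_difference_square_def by metis
    next
      assume "(x - c)^2 = (c - a)*(c - b)"
      moreover have "y^2 = (x - c)*(x - a)*(x - b)" using xy(3) by (simp add: algebra_simps)
      ultimately show ?thesis
        using galois_group_negates_ordinate[OF sc char abc(3,1,2) abc(6)[symmetric] abc(5)[symmetric] _ _ xy(1,2) False] ns
        unfolding some_difference_square_def by metis
    qed
    then show ?thesis using that by (auto simp: Affine point_map_def point_neg_cubic_curve)
  qed (use that id_in_galois_group in \<open>auto simp: Affine point_map_def point_neg_cubic_curve\<close>)
qed (use that id_in_galois_group in auto)

text \<open>The point (a + v, v (v + a - b) / t) with v^2 = (a - b)(a - c) halves (a, 0).\<close>
lemma cubic_curve_halving_point:
  fixes a b c t :: "'a::field"
  assumes L: "subfield L" "separably_closed L" and char: "(2::'a) \<noteq> 0"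
    and abc: "a \<in> L" "b \<in> L" "c \<in> L" "a \<noteq> b" "b \<noteq> c" "a \<noteq> c"
    and t: "t \<in> L" "t \<noteq> 0" "t^2 = a - b"
  obtains x y where "on_curve (cubic_curve a b c) L (Affine x y)" "y \<noteq> 0"
    "y * t = (x - a) * (x - b)" "point_double (cubic_curve a b c) (Affine x y) = Affine a 0"
proof -
  obtain v where v: "v \<in> L" "v^2 = (a - b)*(a - c)"
    using separably_closed_square_root[OF L char, of "(a - b)*(a - c)"] abc L
    by (auto simp: subfield_closed)
  have "v \<noteq> 0" using v abc by auto
  moreover have "v + (a - b) \<noteq> 0"
  proof
    assume "v + (a - b) = 0"
    then have "v = - (a - b)" by (simp add: add_eq_0_iff2)
    then have "(a - b) * (c - b) = 0" using v(2) by algebra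
    then show False using abc by simp
  qed
  ultimately have y0: "v * (v + (a - b)) / t \<noteq> 0" using t by simp
  define x where "x = a + v"
  define y where "y = v * (v + (a - b)) / t"
  have "y * t = v * (v + (a - b))" using t(2) by (simp add: y_def)
  also have "\<dots> = (x - a) * (x - b)" by (simp add: x_def algebra_simps)
  finally have yt: "y * t = (x - a) * (x - b)" .
  have "(a - b) * y^2 = (a - b) * ((x - a)*(x - b)*(x - c))"
    using yt t(3) v(2) unfolding x_def by algebra
  moreover have "x \<in> L" "y \<in> L" using v abc t L by (simp_all add: x_def y_def subfield_closed)
  ultimately have P: "on_curve (cubic_curve a b c) L (Affine x y)"
    using abc by (simp add: on_curve_cubic_curve)
  moreover have "point_double (cubic_curve a b c) (Affine x y) = Affine a 0"
    using point_double_cubic_curve_eq_iff[OF char L(1) abc(1-3) P] y0 v(2) by (simp add: x_def y_def)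
  ultimately show ?thesis using that y0 yt unfolding y_def by blast
qed

lemma four_torsion_orbit_avoids_neg_cubic_curve:
  fixes a b c t :: "'a::field"
  assumes sc: "separable_closure K L" and char: "(2::'a) \<noteq> 0"
    and abc: "a \<in> K" "b \<in> K" "c \<in> K" "a \<noteq> b" "b \<noteq> c" "a \<noteq> c"
    and t: "t \<in> K" "t \<noteq> 0" "t^2 = a - b"
  shows "four_torsion_orbit_avoids_neg K L (cubic_curve a b c)"
proof -
  have L: "subfield L" "separably_closed L" and KL: "K \<subseteq> L"
    using sc by (auto simp: separable_closure_def)
  have abcL: "a \<in> L" "b \<in> L" "c \<in> L" "t \<in> L" using abc t KL by auto
  obtain x y where P: "on_curve (cubic_curve a b c) L (Affine x y)" and y0: "y \<noteq> 0"
    and yt: "y * t = (x - a) * (x - b)" and half: "point_double (cubic_curve a b c) (Affine x y) = Affine a 0"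
    using cubic_curve_halving_point[OF L char abcL(1-3) abc(4-6) abcL(4) t(2,3)] .
  have xyL: "x \<in> L" "y \<in> L" using P by (simp_all add: on_curve_cubic_curve)
  have "point_map \<sigma> (Affine x y) \<noteq> point_neg (cubic_curve a b c) (Affine x y)"
    if \<sigma>: "\<sigma> \<in> galois_group K L" for \<sigma>
  proof
    assume "point_map \<sigma> (Affine x y) = point_neg (cubic_curve a b c) (Affine x y)"
    then have \<sigma>xy: "\<sigma> x = x" "\<sigma> y = - y" by (simp_all add: point_map_def point_neg_cubic_curve)
    note hom = galois_group_ring_hom_on[OF \<sigma>]
    have RL: "subring L" using L(1) by (rule subfield_imp_subring)
    \<comment> \<open>y t = (x - a)(x - b) is fixed by \<sigma>, and so is t\<close>
    have "\<sigma> y * t = \<sigma> (y * t)" using hom ring_hom_on_mult[OF hom(1) xyL(2) abcL(4)] t(1) by simp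
    also have "\<dots> = (x - a) * (x - b)"
      using yt hom ring_hom_on_mult[OF hom(1)] ring_hom_on_diff[OF hom(1) RL] xyL abcL abc \<sigma>xy(1) L(1)
      by (simp add: subfield_closed)
    finally have "\<sigma> y = y" using yt t(2) by (metis mult_cancel_right)
    then show False using \<sigma>xy(2) y0 char by simp
  qed
  moreover have "point_double (cubic_curve a b c) (point_double (cubic_curve a b c) (Affine x y)) = Infinity"
    using half by (simp add: point_double_cubic_curve_Infinity_iff)
  ultimately show ?thesis unfolding four_torsion_orbit_avoids_neg_def using P by blast
qed

definition rational_two_torsion :: "'a::field set \<Rightarrow> 'a set \<Rightarrow> 'a weierstrass \<Rightarrow> bool" where
  "rational_two_torsion K L E \<longleftrightarrow>
     (\<forall>P. on_curve E L P \<and> point_double E P = Infinity \<longrightarrow> on_curve E K P)"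

lemma rational_two_torsion_iso_params:
  assumes K: "subfield K" and L: "subfield L" "K \<subseteq> L"
    and iso: "iso_params E E' u r s t" and urst: "u \<in> K" "r \<in> K" "s \<in> K" "t \<in> K"
  shows "rational_two_torsion K L E \<longleftrightarrow> rational_two_torsion K L E'"
proof -
  note on_K = on_curve_change_coords_iff[OF iso K urst]
  note on_L = on_curve_change_coords_iff[OF iso L(1) urst[THEN subsetD[OF L(2)]]]
  have double_Infinity: "point_double E (change_coords u r s t P) = Infinity \<longleftrightarrow>
      point_double E' P = Infinity" if "on_curve E' L P" for P
    using point_double_change_coords[OF iso that] by simp
  have u: "u \<noteq> 0" using iso by (rule iso_params_nonzero)
  show ?thesis
    unfolding rational_two_torsion_def
  proof (intro iffI allI impI; elim conjE)
    fix P assume H: "\<forall>Q. on_curve E L Q \<and> point_double E Q = Infinity \<longrightarrow> on_curve E K Q"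
      and P: "on_curve E' L P" "point_double E' P = Infinity"
    then show "on_curve E' K P" using on_K on_L double_Infinity by blast
  next
    fix Q assume H: "\<forall>P. on_curve E' L P \<and> point_double E' P = Infinity \<longrightarrow> on_curve E' K P"
      and Q: "on_curve E L Q" "point_double E Q = Infinity"
    obtain P where "Q = change_coords u r s t P" using change_coords_surj[OF u] .
    then show "on_curve E K Q" using H Q on_K on_L double_Infinity by blast
  qed
qed

lemma four_torsion_orbit_avoids_neg_iso_params:
  assumes K: "subfield K" and L: "subfield L" "K \<subseteq> L"
    and iso: "iso_params E E' u r s t" and urst: "u \<in> K" "r \<in> K" "s \<in> K" "t \<in> K"
  shows "four_torsion_orbit_avoids_neg K L E \<longleftrightarrow> four_torsion_orbit_avoids_neg K L E'"
proof -
  have urstL: "u \<in> L" "r \<in> L" "s \<in> L" "t \<in> L" using urst L(2) by auto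
  note on_L = on_curve_change_coords_iff[OF iso L(1) urstL]
  have u: "u \<noteq> 0" using iso by (rule iso_params_nonzero)
  have double_twice: "point_double E (point_double E (change_coords u r s t P)) = Infinity \<longleftrightarrow>
      point_double E' (point_double E' P) = Infinity" if P: "on_curve E' L P" for P
    using point_double_twice_change_coords[OF iso P] by simp
  have conj_neg: "point_map \<sigma> (change_coords u r s t P) = point_neg E (change_coords u r s t P) \<longleftrightarrow>
      point_map \<sigma> P = point_neg E' P"
    if P: "on_curve E' L P" and \<sigma>: "\<sigma> \<in> galois_group K L" for P \<sigma>
  proof -
    note hom = galois_group_ring_hom_on[OF \<sigma>]
    have "point_map \<sigma> (change_coords u r s t P) = change_coords u r s t (point_map \<sigma> P)"
      using point_map_change_coords[OF hom(1) L(1) urstL _ _ _ _ P] hom(2) urst by simp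
    then show ?thesis using point_neg_change_coords[OF iso] change_coords_inj[OF u] by metis
  qed
  show ?thesis
    unfolding four_torsion_orbit_avoids_neg_def
  proof (intro iffI; elim exE conjE)
    fix Q assume Q: "on_curve E L Q" "point_double E (point_double E Q) = Infinity"
      "\<forall>\<sigma>\<in>galois_group K L. point_map \<sigma> Q \<noteq> point_neg E Q"
    obtain P where Q_eq: "Q = change_coords u r s t P" using change_coords_surj[OF u] .
    then have P: "on_curve E' L P" using Q(1) on_L by simp
    show "\<exists>P. on_curve E' L P \<and> point_double E' (point_double E' P) = Infinity \<and>
        (\<forall>\<sigma>\<in>galois_group K L. point_map \<sigma> P \<noteq> point_neg E' P)"
      using P Q double_twice[OF P] conj_neg[OF P] unfolding Q_eq by blast
  next
    fix P assume P: "on_curve E' L P" "point_double E' (point_double E' P) = Infinity"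
      "\<forall>\<sigma>\<in>galois_group K L. point_map \<sigma> P \<noteq> point_neg E' P"
    show "\<exists>Q. on_curve E L Q \<and> point_double E (point_double E Q) = Infinity \<and>
        (\<forall>\<sigma>\<in>galois_group K L. point_map \<sigma> Q \<noteq> point_neg E Q)"
      using P on_L double_twice[OF P(1)] conj_neg[OF P(1)] by blast
  qed
qed

lemma rational_two_torsion_cubic_curve_iff:
  fixes a b c :: "'a::field"
  assumes char: "(2::'a) \<noteq> 0" and K: "subfield K" and L: "subfield L"
    and abc: "a \<in> L" "b \<in> L" "c \<in> L"
  shows "rational_two_torsion K L (cubic_curve a b c) \<longleftrightarrow> a \<in> K \<and> b \<in> K \<and> c \<in> K"
proof
  assume H: "rational_two_torsion K L (cubic_curve a b c)"
  have "e \<in> K" if "e \<in> {a, b, c}" for e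
  proof -
    have "on_curve (cubic_curve a b c) L (Affine e 0)" "point_double (cubic_curve a b c) (Affine e 0) = Infinity"
      using that abc subfield_closed(1)[OF L]
      by (auto simp: on_curve_cubic_curve point_double_cubic_curve_Infinity_iff)
    then have "on_curve (cubic_curve a b c) K (Affine e 0)" using H unfolding rational_two_torsion_def by blast
    then show ?thesis by (simp add: on_curve_cubic_curve)
  qed
  then show "a \<in> K \<and> b \<in> K \<and> c \<in> K" by blast
next
  assume "a \<in> K \<and> b \<in> K \<and> c \<in> K"
  then show "rational_two_torsion K L (cubic_curve a b c)"
    using cubic_curve_two_torsion[OF char] subfield_closed(1)[OF K]
    by (fastforce simp: rational_two_torsion_def on_curve_cubic_curve on_curve_def)
qed

definition square_cubic_model :: "'a::field set \<Rightarrow> 'a weierstrass \<Rightarrow> bool" where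
  "square_cubic_model K E \<longleftrightarrow>
     (\<exists>a\<in>K. \<exists>b\<in>K. \<exists>c\<in>K. iso_over K E (cubic_curve a b c) \<and> some_difference_square K a b c)"

lemma square_cubic_model_iff:
  "square_cubic_model K E \<longleftrightarrow>
    (\<exists>a\<in>K. \<exists>b\<in>K. \<exists>c\<in>K. iso_over K E (cubic_curve a b c) \<and> nonzero_square K (a - b))"
proof
  assume "square_cubic_model K E"
  then obtain a b c where abc: "a \<in> K" "b \<in> K" "c \<in> K" "iso_over K E (cubic_curve a b c)"
    and sq: "some_difference_square K a b c"
    by (auto simp: square_cubic_model_def)
  have "cubic_curve a b c = cubic_curve b a c" "cubic_curve a b c = cubic_curve b c a"
    "cubic_curve a b c = cubic_curve c b a" "cubic_curve a b c = cubic_curve c a b"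
    "cubic_curve a b c = cubic_curve a c b"
    by (metis cubic_curve_swap cubic_curve_rotate)+
  then show "\<exists>a\<in>K. \<exists>b\<in>K. \<exists>c\<in>K. iso_over K E (cubic_curve a b c) \<and> nonzero_square K (a - b)"
    using sq abc unfolding some_difference_square_def by metis
qed (auto simp: square_cubic_model_def some_difference_square_def)


lemma iso_params_cubic_curve_legendre_curve:
  assumes t: "t^2 = a - b" "t \<noteq> 0"
  shows "iso_params (cubic_curve a b c) (legendre_curve ((c - b) / (a - b))) t b 0 0"
proof -
  have ab: "a - b \<noteq> 0" using t by auto
  have "t^4 = (t^2)^2" by (simp flip: power_mult)
  then have "t^4 = (a - b)^2" using t(1) by simp
  then show ?thesis
    unfolding iso_params_def cubic_curve_def legendre_curve_def prod.case
    using t ab by (simp add: field_simps power2_eq_square power3_eq_cube) (intro conjI; algebra)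
qed

lemma is_legendre_iff_square_cubic_model:
  assumes K: "subfield K" and ell: "elliptic_curve K E"
  shows "is_legendre K E \<longleftrightarrow> square_cubic_model K E"
proof
  assume "is_legendre K E"
  then obtain l where l: "l \<in> K" "iso_over K E (legendre_curve l)" by (auto simp: is_legendre_def)
  have "legendre_curve l = cubic_curve 0 1 l" by (simp add: legendre_curve_def cubic_curve_def)
  moreover have "nonzero_square K (1 - 0)"
    using K subfield_closed(2) by (auto simp: nonzero_square_def intro!: bexI[of _ 1])
  ultimately show "square_cubic_model K E"
    using l K subfield_closed(1,2) unfolding square_cubic_model_def some_difference_square_def
    by (metis cubic_curve_swap)
next
  assume "square_cubic_model K E"
  then obtain a b c t where abc: "a \<in> K" "b \<in> K" "c \<in> K" "iso_over K E (cubic_curve a b c)"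
    and t: "t \<in> K" "t \<noteq> 0" "t^2 = a - b"
    by (auto simp: square_cubic_model_iff nonzero_square_def)
  obtain u r s t' where urst: "u \<in> K" "r \<in> K" "s \<in> K" "t' \<in> K"
    and iso: "iso_params E (cubic_curve a b c) u r s t'"
    using abc(4) by (auto simp: iso_over_iff_iso_params)
  have d: "a \<noteq> b" "b \<noteq> c" "a \<noteq> c" using cubic_curve_distinct[OF ell iso] by auto
  define l where "l = (c - b) / (a - b)"
  have "iso_params E (legendre_curve l) (u * t) (r + u^2 * b) (s + u * 0) (t' + u^3 * 0 + s * u^2 * b)"
    using iso_params_trans[OF iso iso_params_cubic_curve_legendre_curve[OF t(3,2)]] by (simp add: l_def)
  then have "iso_over K E (legendre_curve l)"
    unfolding iso_over_iff_iso_params using urst t abc K by (force simp: subfield_closed)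
  moreover have "l \<in> K" "l \<noteq> 0" "l \<noteq> 1" using abc d K by (auto simp: l_def subfield_closed)
  ultimately show "is_legendre K E" by (auto simp: is_legendre_def)
qed

lemma square_cubic_model_imp_torsion:
  fixes E :: "'a::field weierstrass"
  assumes char: "(2::'a) \<noteq> 0" and sc: "separable_closure K L" and ell: "elliptic_curve K E"
    and model: "square_cubic_model K E"
  shows "rational_two_torsion K L E" "four_torsion_orbit_avoids_neg K L E"
proof -
  have K: "subfield K" and L: "subfield L" "K \<subseteq> L" using sc by (auto simp: separable_closure_def)
  obtain a b c t where abc: "a \<in> K" "b \<in> K" "c \<in> K" "iso_over K E (cubic_curve a b c)"
    and t: "t \<in> K" "t \<noteq> 0" "t^2 = a - b"
    using model by (auto simp: square_cubic_model_iff nonzero_square_def)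
  obtain u r s t' where urst: "u \<in> K" "r \<in> K" "s \<in> K" "t' \<in> K"
    and iso: "iso_params E (cubic_curve a b c) u r s t'"
    using abc(4) by (auto simp: iso_over_iff_iso_params)
  have d: "a \<noteq> b" "b \<noteq> c" "a \<noteq> c" using cubic_curve_distinct[OF ell iso] by auto
  show "rational_two_torsion K L E"
    using rational_two_torsion_iso_params[OF K L iso urst]
      rational_two_torsion_cubic_curve_iff[OF char K L(1)] abc L(2) by blast
  show "four_torsion_orbit_avoids_neg K L E"
    using four_torsion_orbit_avoids_neg_iso_params[OF K L iso urst]
      four_torsion_orbit_avoids_neg_cubic_curve[OF sc char abc(1-3) d t] by blast
qed

lemma torsion_imp_square_cubic_model:
  fixes E :: "'a::field weierstrass"
  assumes char: "(2::'a) \<noteq> 0" and sc: "separable_closure K L" and ell: "elliptic_curve K E"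
    and two: "rational_two_torsion K L E" and four: "four_torsion_orbit_avoids_neg K L E"
  shows "square_cubic_model K E"
proof -
  have K: "subfield K" and L: "subfield L" "K \<subseteq> L" using sc by (auto simp: separable_closure_def)
  obtain a b c s t where abcL: "a \<in> L" "b \<in> L" "c \<in> L" and st: "s \<in> K" "t \<in> K"
    and iso: "iso_params E (cubic_curve a b c) 1 0 s t"
    using exists_cubic_model[OF char sc ell] .
  have urst: "1 \<in> K" "0 \<in> K" "s \<in> K" "t \<in> K" using st K by (simp_all add: subfield_closed)
  have abc: "a \<in> K" "b \<in> K" "c \<in> K"
    using two rational_two_torsion_iso_params[OF K L iso urst]
      rational_two_torsion_cubic_curve_iff[OF char K L(1) abcL] by blast+
  have d: "a \<noteq> b" "b \<noteq> c" "a \<noteq> c" using cubic_curve_distinct[OF ell iso] by auto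
  have "iso_over K E (cubic_curve a b c)" using iso urst unfolding iso_over_iff_iso_params by blast
  moreover have "some_difference_square K a b c"
  proof (rule ccontr)
    assume ns: "\<not> some_difference_square K a b c"
    obtain P where P: "on_curve (cubic_curve a b c) L P"
      "point_double (cubic_curve a b c) (point_double (cubic_curve a b c) P) = Infinity"
      "\<forall>\<sigma>\<in>galois_group K L. point_map \<sigma> P \<noteq> point_neg (cubic_curve a b c) P"
      using four four_torsion_orbit_avoids_neg_iso_params[OF K L iso urst]
      unfolding four_torsion_orbit_avoids_neg_def by blast
    show False using cubic_curve_four_torsion_orbit_meets_neg[OF sc char abc d ns P(1,2)] P(3) by blast
  qed
  ultimately show ?thesis using abc by (auto simp: square_cubic_model_def)
qed

theorem mainTheorem4:
  fixes K L :: "'a::field set" and E :: "'a weierstrass"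
  assumes char: "(2::'a) \<noteq> 0"
    and sepcl: "separable_closure K L"
    and ell: "elliptic_curve K E"
  shows "(is_legendre K E \<longleftrightarrow>
           (\<exists>a\<in>K. \<exists>b\<in>K. \<exists>c\<in>K. iso_over K E (cubic_curve a b c) \<and>
              (nonzero_square K (a - b) \<or> nonzero_square K (b - a) \<or>
               nonzero_square K (b - c) \<or> nonzero_square K (c - b) \<or>
               nonzero_square K (c - a) \<or> nonzero_square K (a - c))))
       \<and> ((\<exists>a\<in>K. \<exists>b\<in>K. \<exists>c\<in>K. iso_over K E (cubic_curve a b c) \<and>
              (nonzero_square K (a - b) \<or> nonzero_square K (b - a) \<or>
               nonzero_square K (b - c) \<or> nonzero_square K (c - b) \<or>
               nonzero_square K (c - a) \<or> nonzero_square K (a - c)))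
          \<longleftrightarrow>
          ((\<forall>P. on_curve E L P \<and> point_double E P = Infinity \<longrightarrow> on_curve E K P) \<and>
           (\<exists>P. on_curve E L P \<and> point_double E (point_double E P) = Infinity \<and>
                (\<forall>\<sigma>\<in>galois_group K L. point_map \<sigma> P \<noteq> point_neg E P))))"
proof -
  have K: "subfield K" using sepcl by (simp add: separable_closure_def)
  have "is_legendre K E \<longleftrightarrow> square_cubic_model K E"
    using is_legendre_iff_square_cubic_model[OF K ell] .
  moreover have "square_cubic_model K E \<longleftrightarrow>
      rational_two_torsion K L E \<and> four_torsion_orbit_avoids_neg K L E"
    using square_cubic_model_imp_torsion[OF char sepcl ell]
      torsion_imp_square_cubic_model[OF char sepcl ell] by blast
  ultimately show ?thesis
    unfolding square_cubic_model_def some_difference_square_def rational_two_torsion_def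
      four_torsion_orbit_avoids_neg_def
    by blast
qed

end
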